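(* Let $V\subseteq\mathcal V$ be finite, $\mathbb E\in\mathit{NProg}(V)$, $W\subseteq\mathcal V$ finite and $P,Q$ projectors on $\mathcal H_W$. Then $wp^a.\mathbb E.Q=\bigwedge_{\mathcal E\in\mathbb E}E(\mathcal E^\dagger(Q))$, $wlp^a.\mathbb E.Q=\bigwedge_{\mathcal E\in\mathbb E}\mathcal N(\mathcal E^\dagger(Q^\perp))$, and $sp^a.\mathbb E.P=\bigvee_{\mathcal E\in\mathbb E}\lceil\mathcal E(P)\rceil$.
   Context: $\mathcal V$ is a countably infinite set of qubit variables; $\mathcal H_V=\bigotimes_{q\in V}\mathcal H_q$. $\mathcal D(\mathcal H)$: partial density operators; projectors are identified with their image subspaces, ordered by inclusion $\sqsubseteq$; $\wedge$ intersection, $\vee$ span of union; $Q^\perp=I-Q$. $\mathit{DProg}(V)$: completely positive trace-nonincreasing super-operators on $\mathcal L(\mathcal H_V)$, $\mathcal E^\dagger$ the adjoint; $\mathit{NProg}(V)$: nonempty convex closed subsets of $\mathit{DProg}(V)$. Convention: operators/super-operators are implicitly extended to $\mathcal H_{V\cup W}$ (and larger systems) by tensoring with identities; projectors are regarded on $\mathcal H_{V\cup W}$. $E(A)=\{|\psi\rangle:A|\psi\rangle=|\psi\rangle\}$; $\mathcal N(B)=\{|\psi\rangle:\langle\psi|B|\psi\rangle=0\}$; $\lceil\rho\rceil$ is the support of a positive operator. For projectors $P,Q$: $\mathbb E\models_{tot}(\{P\},\{Q\})$ iff for all finite $X\supseteq V\cup W$ and $\rho\in\mathcal D(\mathcal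 H_X)$, ${\rm tr}(P\rho)\le\inf_{\mathcal E\in\mathbb E}{\rm tr}(Q\mathcal E(\rho))$; $\mathbb E\models_{par}(\{P\},\{Q\})$ iff for all such $X,\rho$, ${\rm tr}(P\rho)\le\inf_{\mathcal E\in\mathbb E}[{\rm tr}(Q\mathcal E(\rho))+{\rm tr}(\rho)-{\rm tr}(\mathcal E(\rho))]$. $wp^a.\mathbb E.Q$ is the largest projector $P$ with $\mathbb E\models_{tot}(\{P\},\{Q\})$; $wlp^a.\mathbb E.Q$ the largest projector $P$ with $\mathbb E\models_{par}(\{P\},\{Q\})$; $sp^a.\mathbb E.P$ the smallest projector $R$ with $\mathbb E\models_{par}(\{P\},\{R\})$. *)

theory Defs
  imports Complex_Main
begin

text \<open>
Qubit variables are natural numbers (a countably infinite set).  For a finite set X of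
qubit variables, the computational basis of H_X is indexed by the subsets s of X
(s = the set of qubits in state 1).  Operators on H_X are represented as matrices
indexed by such subsets, i.e. functions of type nat set => nat set => complex that vanish
outside Pow X x Pow X; vectors as functions nat set => complex vanishing outside Pow X.
\<close>

type_synonym qop = "nat set \<Rightarrow> nat set \<Rightarrow> complex"
type_synonym qvec = "nat set \<Rightarrow> complex"
type_synonym sop = "qop \<Rightarrow> qop"

definition wf_op :: "nat set \<Rightarrow> qop \<Rightarrow> bool" where
  "wf_op X A \<longleftrightarrow> (\<forall>s t. \<not> (s \<subseteq> X \<and> t \<subseteq> X) \<longrightarrow> A s t = 0)"

definition vecs :: "nat set \<Rightarrow> qvec set" where
  "vecs X = {\<psi>. \<forall>s. \<not> s \<subseteq> X \<longrightarrow> \<psi> s = 0}"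

definition op_mult :: "nat set \<Rightarrow> qop \<Rightarrow> qop \<Rightarrow> qop" where
  "op_mult X A B = (\<lambda>s t. \<Sum>u\<in>Pow X. A s u * B u t)"

definition op_adj :: "qop \<Rightarrow> qop" where
  "op_adj A = (\<lambda>s t. cnj (A t s))"

definition op_apply :: "nat set \<Rightarrow> qop \<Rightarrow> qvec \<Rightarrow> qvec" where
  "op_apply X A \<psi> = (\<lambda>s. \<Sum>t\<in>Pow X. A s t * \<psi> t)"

definition qtr :: "nat set \<Rightarrow> qop \<Rightarrow> complex" where
  "qtr X A = (\<Sum>s\<in>Pow X. A s s)"

definition qform :: "nat set \<Rightarrow> qop \<Rightarrow> qvec \<Rightarrow> complex" where
  "qform X A \<psi> = (\<Sum>s\<in>Pow X. \<Sum>t\<in>Pow X. cnj (\<psi> s) * A s t * \<psi> t)"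

definition id_op :: "nat set \<Rightarrow> qop" where
  "id_op X = (\<lambda>s t. if s \<subseteq> X \<and> s = t then 1 else 0)"

definition is_pos :: "nat set \<Rightarrow> qop \<Rightarrow> bool" where
  "is_pos X A \<longleftrightarrow> wf_op X A \<and>
     (\<forall>\<psi>\<in>vecs X. Im (qform X A \<psi>) = 0 \<and> 0 \<le> Re (qform X A \<psi>))"

definition pdens :: "nat set \<Rightarrow> qop \<Rightarrow> bool" where
  "pdens X \<rho> \<longleftrightarrow> is_pos X \<rho> \<and> Re (qtr X \<rho>) \<le> 1"

definition is_proj :: "nat set \<Rightarrow> qop \<Rightarrow> bool" where
  "is_proj X P \<longleftrightarrow> wf_op X P \<and> op_mult X P P = P \<and> op_adj P = P"

text \<open>Image subspace (range) of an operator; projectors are identified with it.\<close>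
definition img :: "nat set \<Rightarrow> qop \<Rightarrow> qvec set" where
  "img X A = op_apply X A ` vecs X"

definition proj_le :: "nat set \<Rightarrow> qop \<Rightarrow> qop \<Rightarrow> bool" where
  "proj_le X P Q \<longleftrightarrow> img X P \<subseteq> img X Q"

definition proj_perp :: "nat set \<Rightarrow> qop \<Rightarrow> qop" where
  "proj_perp X Q = (\<lambda>s t. id_op X s t - Q s t)"

text \<open>Extension of an operator A on H_Y to H_X (X containing Y): A tensor I_{X-Y}.\<close>
definition ext_op :: "nat set \<Rightarrow> nat set \<Rightarrow> qop \<Rightarrow> qop" where
  "ext_op Y X A = (\<lambda>s t. if s \<subseteq> X \<and> t \<subseteq> X \<and> s - Y = t - Y
                          then A (s \<inter> Y) (t \<inter> Y) else 0)"

definition restr_op :: "nat set \<Rightarrow> qop \<Rightarrow> qop" where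
  "restr_op V A = (\<lambda>s t. if s \<subseteq> V \<and> t \<subseteq> V then A s t else 0)"

text \<open>Extension of a super-operator E on L(H_V) to L(H_X) (X containing V): E tensor id,
  acting blockwise on rho = sum_{a,b} rho_{ab} tensor |a><b| (a, b subsets of X - V).\<close>
definition ext_sop :: "nat set \<Rightarrow> nat set \<Rightarrow> sop \<Rightarrow> qop \<Rightarrow> qop" where
  "ext_sop V X E \<rho> = (\<lambda>s t. if s \<subseteq> X \<and> t \<subseteq> X then
      E (\<lambda>u v. if u \<subseteq> V \<and> v \<subseteq> V then \<rho> (u \<union> (s - V)) (v \<union> (t - V)) else 0)
        (s \<inter> V) (t \<inter> V)
    else 0)"

text \<open>A super-operator is represented canonically: it only reads the H_V-part of its
  argument and returns an operator on H_V.  Complete positivity: E tensor id is positive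
  for every finite extension X of V.\<close>
definition is_dprog :: "nat set \<Rightarrow> sop \<Rightarrow> bool" where
  "is_dprog V E \<longleftrightarrow>
     (\<forall>A. E A = E (restr_op V A)) \<and>
     (\<forall>A. wf_op V (E A)) \<and>
     (\<forall>c A B. E (\<lambda>s t. c * A s t + B s t) = (\<lambda>s t. c * E A s t + E B s t)) \<and>
     (\<forall>X \<rho>. finite X \<and> V \<subseteq> X \<and> is_pos X \<rho> \<longrightarrow> is_pos X (ext_sop V X E \<rho>)) \<and>
     (\<forall>\<rho>. is_pos V \<rho> \<longrightarrow> Re (qtr V (E \<rho>)) \<le> Re (qtr V \<rho>))"

text \<open>NProg(V): nonempty, convex, (topologically) closed subsets of DProg(V).  Closedness
  is sequential closedness for entrywise convergence (the space is finite dimensional).\<close>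
definition is_nprog :: "nat set \<Rightarrow> sop set \<Rightarrow> bool" where
  "is_nprog V EE \<longleftrightarrow>
     EE \<noteq> {} \<and> EE \<subseteq> {E. is_dprog V E} \<and>
     (\<forall>E1\<in>EE. \<forall>E2\<in>EE. \<forall>r::real. 0 \<le> r \<and> r \<le> 1 \<longrightarrow>
        (\<lambda>A s t. of_real r * E1 A s t + of_real (1 - r) * E2 A s t) \<in> EE) \<and>
     (\<forall>f E. (\<forall>n. f n \<in> EE) \<and> (\<forall>A s t. (\<lambda>n. f n A s t) \<longlonglongrightarrow> E A s t) \<longrightarrow> E \<in> EE)"

text \<open>The adjoint E^dagger, determined by tr(E^dagger(A) B) = tr(A E(B)); written out in
  terms of the matrix units |t><s|.\<close>
definition sop_adj :: "nat set \<Rightarrow> sop \<Rightarrow> sop" where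
  "sop_adj V E = (\<lambda>A s t. if s \<subseteq> V \<and> t \<subseteq> V then
      (\<Sum>u\<in>Pow V. \<Sum>v\<in>Pow V. A v u * E (\<lambda>a b. if a = t \<and> b = s then 1 else 0) u v)
    else 0)"

definition sat_tot :: "nat set \<Rightarrow> nat set \<Rightarrow> sop set \<Rightarrow> qop \<Rightarrow> qop \<Rightarrow> bool" where
  "sat_tot V W EE P Q \<longleftrightarrow>
     (\<forall>X \<rho>. finite X \<and> V \<union> W \<subseteq> X \<and> pdens X \<rho> \<longrightarrow>
        Re (qtr X (op_mult X (ext_op (V \<union> W) X P) \<rho>))
          \<le> (INF E\<in>EE. Re (qtr X (op_mult X (ext_op (V \<union> W) X Q) (ext_sop V X E \<rho>)))))"

definition sat_par :: "nat set \<Rightarrow> nat set \<Rightarrow> sop set \<Rightarrow> qop \<Rightarrow> qop \<Rightarrow> bool" where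
  "sat_par V W EE P Q \<longleftrightarrow>
     (\<forall>X \<rho>. finite X \<and> V \<union> W \<subseteq> X \<and> pdens X \<rho> \<longrightarrow>
        Re (qtr X (op_mult X (ext_op (V \<union> W) X P) \<rho>))
          \<le> (INF E\<in>EE. Re (qtr X (op_mult X (ext_op (V \<union> W) X Q) (ext_sop V X E \<rho>)))
                         + Re (qtr X \<rho>) - Re (qtr X (ext_sop V X E \<rho>))))"

definition wp_a :: "nat set \<Rightarrow> nat set \<Rightarrow> sop set \<Rightarrow> qop \<Rightarrow> qop" where
  "wp_a V W EE Q = (THE P. is_proj (V \<union> W) P \<and> sat_tot V W EE P (ext_op W (V \<union> W) Q) \<and>
      (\<forall>P'. is_proj (V \<union> W) P' \<and> sat_tot V W EE P' (ext_op W (V \<union> W) Q)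
              \<longrightarrow> proj_le (V \<union> W) P' P))"

definition wlp_a :: "nat set \<Rightarrow> nat set \<Rightarrow> sop set \<Rightarrow> qop \<Rightarrow> qop" where
  "wlp_a V W EE Q = (THE P. is_proj (V \<union> W) P \<and> sat_par V W EE P (ext_op W (V \<union> W) Q) \<and>
      (\<forall>P'. is_proj (V \<union> W) P' \<and> sat_par V W EE P' (ext_op W (V \<union> W) Q)
              \<longrightarrow> proj_le (V \<union> W) P' P))"

definition sp_a :: "nat set \<Rightarrow> nat set \<Rightarrow> sop set \<Rightarrow> qop \<Rightarrow> qop" where
  "sp_a V W EE P = (THE R. is_proj (V \<union> W) R \<and> sat_par V W EE (ext_op W (V \<union> W) P) R \<and>
      (\<forall>R'. is_proj (V \<union> W) R' \<and> sat_par V W EE (ext_op W (V \<union> W) P) R'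
              \<longrightarrow> proj_le (V \<union> W) R R'))"

text \<open>E(A) = {psi. A psi = psi}, N(B) = {psi. <psi|B|psi> = 0}, support of a positive
  operator (= its range), and complex linear span.\<close>
definition eig1 :: "nat set \<Rightarrow> qop \<Rightarrow> qvec set" where
  "eig1 X A = {\<psi>\<in>vecs X. op_apply X A \<psi> = \<psi>}"

definition nullq :: "nat set \<Rightarrow> qop \<Rightarrow> qvec set" where
  "nullq X B = {\<psi>\<in>vecs X. qform X B \<psi> = 0}"

definition op_supp :: "nat set \<Rightarrow> qop \<Rightarrow> qvec set" where
  "op_supp X A = img X A"

definition cspan :: "qvec set \<Rightarrow> qvec set" where
  "cspan S = {(\<lambda>s. \<Sum>i<n. c i * v i s) | (n::nat) c v. \<forall>i<n. v i \<in> S}"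

end

theory Submission
  imports Defs
begin

text \<open>
  For a program E and a projector Z on H_{V \<union> W}, the duality tr(Z E(\<rho>)) = tr(E^dagger(Z) \<rho>),
  valid on every extension H_X, shows that T = E^dagger(Z) is an effect, 0 \<le> T \<le> I.
  A correctness formula for a projector P is tested on the state P / (tr P + 1); since a positive
  operator B with tr(B P) = 0 annihilates the range of P, total correctness {P} E {Q} forces
  P \<sqsubseteq> E(E^dagger(Q)) and partial correctness forces P \<sqsubseteq> N(E^dagger(Q^perp)).  Conversely, splitting \<rho>
  along P and P^perp turns these range conditions back into the trace inequalities.  For the
  strongest postcondition, tr(E^dagger(R^perp) P) = tr(R^perp E(P)) vanishes exactly when the support of
  E(P) lies in R.  The infimum over EE becomes an intersection, so wp and wlp are the
  projectors onto the intersections and sp the projector onto the span.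
\<close>

section \<open>Matrix algebra on H_X\<close>

definition zero_op :: qop where "zero_op = (\<lambda>s t. 0)"

definition add_op :: "qop \<Rightarrow> qop \<Rightarrow> qop" where "add_op A B = (\<lambda>s t. A s t + B s t)"

definition diff_op :: "qop \<Rightarrow> qop \<Rightarrow> qop" where "diff_op A B = (\<lambda>s t. A s t - B s t)"

definition scale_op :: "complex \<Rightarrow> qop \<Rightarrow> qop" where "scale_op c A = (\<lambda>s t. c * A s t)"

lemma op_mult_assoc: "op_mult X (op_mult X A B) C = op_mult X A (op_mult X B C)"
  unfolding op_mult_def
  by (auto simp: sum_distrib_left sum_distrib_right mult.assoc intro!: ext sum.swap)

lemma qtr_op_mult_commute: "qtr X (op_mult X A B) = qtr X (op_mult X B A)"
  unfolding qtr_def op_mult_def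
  by (subst sum.swap) (simp add: mult.commute)

lemma op_mult_add_left: "op_mult X (add_op A B) C = add_op (op_mult X A C) (op_mult X B C)"
  unfolding op_mult_def add_op_def by (auto simp: distrib_right sum.distrib)

lemma op_mult_add_right: "op_mult X C (add_op A B) = add_op (op_mult X C A) (op_mult X C B)"
  unfolding op_mult_def add_op_def by (auto simp: distrib_left sum.distrib)

lemma op_mult_diff_left: "op_mult X (diff_op A B) C = diff_op (op_mult X A C) (op_mult X B C)"
  unfolding op_mult_def diff_op_def by (auto simp: left_diff_distrib sum_subtractf)

lemma op_mult_diff_right: "op_mult X C (diff_op A B) = diff_op (op_mult X C A) (op_mult X C B)"
  unfolding op_mult_def diff_op_def by (auto simp: right_diff_distrib sum_subtractf)

lemma op_mult_scale_left: "op_mult X (scale_op c A) C = scale_op c (op_mult X A C)"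
  unfolding op_mult_def scale_op_def by (auto simp: sum_distrib_left mult.assoc)

lemma op_mult_scale_right: "op_mult X C (scale_op c A) = scale_op c (op_mult X C A)"
  unfolding op_mult_def scale_op_def by (auto simp: sum_distrib_left mult.assoc mult.left_commute)

lemma op_mult_zero_left: "op_mult X zero_op C = zero_op"
  unfolding op_mult_def zero_op_def by auto

lemma qtr_add: "qtr X (add_op A B) = qtr X A + qtr X B"
  unfolding qtr_def add_op_def by (simp add: sum.distrib)

lemma qtr_diff: "qtr X (diff_op A B) = qtr X A - qtr X B"
  unfolding qtr_def diff_op_def by (simp add: sum_subtractf)

lemma qtr_scale: "qtr X (scale_op c A) = c * qtr X A"
  unfolding qtr_def scale_op_def by (simp add: sum_distrib_left)

lemma qtr_zero: "qtr X zero_op = 0"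
  unfolding qtr_def zero_op_def by simp

lemma op_apply_zero: "op_apply X zero_op x = (\<lambda>_. 0)"
  unfolding op_apply_def zero_op_def by simp

lemma op_mult_id_left: "finite X \<Longrightarrow> wf_op X A \<Longrightarrow> op_mult X (id_op X) A = A"
  unfolding op_mult_def id_op_def wf_op_def
proof (intro ext)
  fix s t assume fin: "finite X" and w: "\<forall>s t. \<not> (s \<subseteq> X \<and> t \<subseteq> X) \<longrightarrow> A s t = 0"
  have "(\<Sum>u\<in>Pow X. (if s \<subseteq> X \<and> s = u then 1 else 0) * A u t)
      = (\<Sum>u\<in>Pow X. if u = s then A s t else 0)"
    by (rule sum.cong) auto
  also have "\<dots> = A s t" using w fin by (auto simp: sum.delta)
  finally show "(\<Sum>u\<in>Pow X. (if s \<subseteq> X \<and> s = u then 1 else 0) * A u t) = A s t" .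
qed

lemma op_mult_id_right: "finite X \<Longrightarrow> wf_op X A \<Longrightarrow> op_mult X A (id_op X) = A"
  unfolding op_mult_def id_op_def wf_op_def
proof (intro ext)
  fix s t assume fin: "finite X" and w: "\<forall>s t. \<not> (s \<subseteq> X \<and> t \<subseteq> X) \<longrightarrow> A s t = 0"
  have "(\<Sum>u\<in>Pow X. A s u * (if u \<subseteq> X \<and> u = t then 1 else 0))
      = (\<Sum>u\<in>Pow X. if u = t then A s t else 0)"
    by (rule sum.cong) auto
  also have "\<dots> = A s t" using w fin by (auto simp: sum.delta)
  finally show "(\<Sum>u\<in>Pow X. A s u * (if u \<subseteq> X \<and> u = t then 1 else 0)) = A s t" .
qed

lemma op_adj_mult: "op_adj (op_mult X A B) = op_mult X (op_adj B) (op_adj A)"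
  unfolding op_adj_def op_mult_def by (auto simp: mult.commute)

lemma op_apply_mult: "op_apply X (op_mult X A B) x = op_apply X A (op_apply X B x)"
  unfolding op_apply_def op_mult_def
  by (auto simp: sum_distrib_left sum_distrib_right mult.assoc intro!: ext sum.swap)

lemma qform_apply: "qform X A x = (\<Sum>s\<in>Pow X. cnj (x s) * op_apply X A x s)"
  unfolding qform_def op_apply_def by (simp add: sum_distrib_left mult.assoc)

lemma wf_op_mult: "wf_op X A \<Longrightarrow> wf_op X B \<Longrightarrow> wf_op X (op_mult X A B)"
  unfolding wf_op_def op_mult_def
proof (intro allI impI)
  fix s t
  assume "\<forall>s t. \<not> (s \<subseteq> X \<and> t \<subseteq> X) \<longrightarrow> A s t = 0" "\<forall>s t. \<not> (s \<subseteq> X \<and> t \<subseteq> X) \<longrightarrow> B s t = 0"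
    and "\<not> (s \<subseteq> X \<and> t \<subseteq> X)"
  then show "(\<Sum>u\<in>Pow X. A s u * B u t) = 0" by (cases "s \<subseteq> X") (auto intro!: sum.neutral)
qed

lemma wf_op_add: "wf_op X A \<Longrightarrow> wf_op X B \<Longrightarrow> wf_op X (add_op A B)"
  unfolding wf_op_def add_op_def by auto

lemma wf_op_diff: "wf_op X A \<Longrightarrow> wf_op X B \<Longrightarrow> wf_op X (diff_op A B)"
  unfolding wf_op_def diff_op_def by auto

lemma wf_op_scale: "wf_op X A \<Longrightarrow> wf_op X (scale_op c A)"
  unfolding wf_op_def scale_op_def by auto

lemma wf_op_zero: "wf_op X zero_op"
  unfolding wf_op_def zero_op_def by auto

lemma wf_op_id: "wf_op X (id_op X)"
  unfolding wf_op_def id_op_def by auto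

lemma op_apply_in_vecs: "wf_op X A \<Longrightarrow> op_apply X A x \<in> vecs X"
  unfolding wf_op_def vecs_def op_apply_def by auto

lemma img_subset_vecs: "wf_op X A \<Longrightarrow> img X A \<subseteq> vecs X"
  unfolding img_def using op_apply_in_vecs by auto

lemma op_adj_add: "op_adj (add_op A B) = add_op (op_adj A) (op_adj B)"
  unfolding op_adj_def add_op_def by auto

lemma op_adj_diff: "op_adj (diff_op A B) = diff_op (op_adj A) (op_adj B)"
  unfolding op_adj_def diff_op_def by auto

lemma op_adj_id: "op_adj (id_op X) = id_op X"
  unfolding op_adj_def id_op_def by (auto intro!: ext)

lemma op_adj_zero: "op_adj zero_op = zero_op"
  unfolding op_adj_def zero_op_def by simp

lemma op_adj_eq_zero_iff: "op_adj A = zero_op \<longleftrightarrow> A = zero_op"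
  unfolding op_adj_def zero_op_def by (auto simp: fun_eq_iff)

lemma proj_perp_eq_diff: "proj_perp X P = diff_op (id_op X) P"
  unfolding proj_perp_def diff_op_def by simp

lemma qtr_proj_perp_mult:
  assumes "finite X" and "wf_op X A"
  shows "qtr X (op_mult X (proj_perp X P) A) = qtr X A - qtr X (op_mult X P A)"
  unfolding proj_perp_eq_diff op_mult_diff_left qtr_diff by (simp add: op_mult_id_left[OF assms])

lemma op_apply_scale: "op_apply X A (\<lambda>s. c * x s) = (\<lambda>s. c * op_apply X A x s)"
  unfolding op_apply_def by (simp add: sum_distrib_left mult_ac)

lemma op_apply_add_scale: "op_apply X A (\<lambda>s. x s + c * y s) = (\<lambda>s. op_apply X A x s + c * op_apply X A y s)"
  unfolding op_apply_def by (rule ext) (simp add: distrib_left sum.distrib sum_distrib_left mult.left_commute)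

section \<open>Positive operators and projectors\<close>

definition sesq :: "nat set \<Rightarrow> qop \<Rightarrow> qvec \<Rightarrow> qvec \<Rightarrow> complex" where
  "sesq X B x y = (\<Sum>s\<in>Pow X. \<Sum>t\<in>Pow X. cnj (x s) * B s t * y t)"

lemma qform_eq_sesq: "qform X B x = sesq X B x x"
  unfolding qform_def sesq_def by simp

lemma sesq_add_left: "sesq X B (\<lambda>u. x u + y u) z = sesq X B x z + sesq X B y z"
  unfolding sesq_def by (simp add: distrib_right sum.distrib)

lemma sesq_add_right: "sesq X B z (\<lambda>u. x u + y u) = sesq X B z x + sesq X B z y"
  unfolding sesq_def by (simp add: distrib_left sum.distrib)

lemma sesq_scale_left: "sesq X B (\<lambda>u. c * x u) z = cnj c * sesq X B x z"
  unfolding sesq_def by (simp add: sum_distrib_left mult.assoc)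

lemma sesq_scale_right: "sesq X B z (\<lambda>u. c * x u) = c * sesq X B z x"
  unfolding sesq_def by (simp add: sum_distrib_left mult.assoc mult.left_commute)

definition ket :: "nat set \<Rightarrow> qvec" where "ket t = (\<lambda>s. if s = t then 1 else 0)"

lemma sesq_ket_ket: "finite X \<Longrightarrow> s \<subseteq> X \<Longrightarrow> t \<subseteq> X \<Longrightarrow> sesq X B (ket s) (ket t) = B s t"
proof -
  assume fin: "finite X" and st: "s \<subseteq> X" "t \<subseteq> X"
  have i: "\<And>a. (\<Sum>b\<in>Pow X. cnj (ket s a) * B a b * ket t b) = cnj (ket s a) * B a t"
  proof -
    fix a
    have "(\<Sum>b\<in>Pow X. cnj (ket s a) * B a b * ket t b) =
          (\<Sum>b\<in>Pow X. if b = t then cnj (ket s a) * B a t else 0)"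
      by (rule sum.cong) (auto simp: ket_def)
    also have "\<dots> = cnj (ket s a) * B a t" using fin st by (simp add: sum.delta)
    finally show "(\<Sum>b\<in>Pow X. cnj (ket s a) * B a b * ket t b) = cnj (ket s a) * B a t" .
  qed
  have "sesq X B (ket s) (ket t) = (\<Sum>a\<in>Pow X. cnj (ket s a) * B a t)"
    unfolding sesq_def using i by simp
  also have "\<dots> = (\<Sum>a\<in>Pow X. if a = s then B s t else 0)"
    by (rule sum.cong) (auto simp: ket_def)
  also have "\<dots> = B s t" using fin st by (simp add: sum.delta)
  finally show ?thesis .
qed

lemma sesq_eq_sum_apply: "sesq X B x y = (\<Sum>s\<in>Pow X. cnj (x s) * op_apply X B y s)"
  unfolding sesq_def op_apply_def by (simp add: sum_distrib_left mult.assoc)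

lemma ket_in_vecs: "s \<subseteq> X \<Longrightarrow> ket s \<in> vecs X"
  unfolding ket_def vecs_def by auto

lemma vecs_lincomb: "x \<in> vecs X \<Longrightarrow> y \<in> vecs X \<Longrightarrow> (\<lambda>u. a * x u + b * y u) \<in> vecs X"
  unfolding vecs_def by auto

lemma qform_lincomb:
  "qform X B (\<lambda>u. a * x u + b * y u) =
     cnj a * a * sesq X B x x + cnj a * b * sesq X B x y + cnj b * a * sesq X B y x + cnj b * b * sesq X B y y"
  unfolding qform_eq_sesq
  by (simp add: sesq_add_left sesq_add_right sesq_scale_left sesq_scale_right algebra_simps)

lemma is_pos_op_adj:
  assumes fin: "finite X" and p: "is_pos X B"
  shows "op_adj B = B"
proof (intro ext)
  fix s t
  have wf: "wf_op X B" using p by (simp add: is_pos_def)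
  show "op_adj B s t = B s t"
  proof (cases "s \<subseteq> X \<and> t \<subseteq> X")
    case False
    then show ?thesis using wf unfolding wf_op_def op_adj_def by auto
  next
    case True
    have q: "\<And>a b. Im (qform X B (\<lambda>u. a * ket s u + b * ket t u)) = 0"
      using p True unfolding is_pos_def by (auto intro!: vecs_lincomb ket_in_vecs)
    have k: "\<And>a b. qform X B (\<lambda>u. a * ket s u + b * ket t u) =
       cnj a * a * B s s + cnj a * b * B s t + cnj b * a * B t s + cnj b * b * B t t"
      using True fin by (simp add: qform_lincomb sesq_ket_ket)
    have 1: "Im (B s s) = 0" using q[of 1 0] k[of 1 0] by simp
    have 2: "Im (B t t) = 0" using q[of 0 1] k[of 0 1] by simp
    have 3: "Im (B s t) + Im (B t s) = 0" using q[of 1 1] k[of 1 1] 1 2 by simp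
    have 4: "Re (B s t) - Re (B t s) = 0" using q[of 1 \<i>] k[of 1 \<i>] 1 2 by simp
    show ?thesis unfolding op_adj_def using 3 4 by (simp add: complex_eq_iff)
  qed
qed

lemma sesq_hermitian_swap: "op_adj B = B \<Longrightarrow> sesq X B x y = cnj (sesq X B y x)"
  unfolding sesq_def
proof -
  assume h: "op_adj B = B"
  have hb: "\<And>s t. B s t = cnj (B t s)" using h unfolding op_adj_def by (metis)
  have "(\<Sum>s\<in>Pow X. \<Sum>t\<in>Pow X. cnj (x s) * B s t * y t) =
        (\<Sum>s\<in>Pow X. \<Sum>t\<in>Pow X. cnj (x s) * cnj (B t s) * y t)" by (simp add: hb[symmetric])
  also have "\<dots> = (\<Sum>t\<in>Pow X. \<Sum>s\<in>Pow X. cnj (x s) * cnj (B t s) * y t)" by (rule sum.swap)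
  also have "\<dots> = cnj (\<Sum>t\<in>Pow X. \<Sum>s\<in>Pow X. cnj (y t) * B t s * x s)"
    by (simp add: mult.commute mult.left_commute)
  finally show "(\<Sum>s\<in>Pow X. \<Sum>t\<in>Pow X. cnj (x s) * B s t * y t) =
        cnj (\<Sum>s\<in>Pow X. \<Sum>t\<in>Pow X. cnj (y s) * B s t * x t)" .
qed

definition sqnorm :: "nat set \<Rightarrow> qvec \<Rightarrow> complex" where
  "sqnorm X x = (\<Sum>s\<in>Pow X. cnj (x s) * x s)"

lemma sqnorm_eq_sum_cmod: "sqnorm X x = of_real (\<Sum>s\<in>Pow X. (cmod (x s))^2)"
proof -
  have "\<And>s. cnj (x s) * x s = of_real ((cmod (x s))^2)"
    by (subst complex_norm_square) (simp add: mult.commute)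
  then show ?thesis unfolding sqnorm_def of_real_sum by simp
qed

lemma sqnorm_eq_zero:
  assumes fin: "finite X" and x: "x \<in> vecs X" and n: "sqnorm X x = 0"
  shows "x = (\<lambda>_. 0)"
proof (intro ext)
  fix s
  have "(\<Sum>s\<in>Pow X. (cmod (x s))^2) = 0" using n by (metis sqnorm_eq_sum_cmod of_real_eq_0_iff)
  then have "\<forall>s\<in>Pow X. (cmod (x s))^2 = 0" using fin by (subst (asm) sum_nonneg_eq_0_iff) auto
  then show "x s = 0" using x unfolding vecs_def by (cases "s \<subseteq> X") auto
qed

lemma quadratic_perturbation_neg: "(m::real) \<ge> 0 \<Longrightarrow> n > 0 \<Longrightarrow> r = n/(m+1) \<Longrightarrow> r^2 * m - 2 * r * n < 0"
proof -
  assume m0: "m \<ge> 0" and np: "n > 0" and rd: "r = n/(m+1)"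
  have e: "(m+1)*r = n" using m0 rd by simp
  have "(m+1)^2 * (r^2*m - 2*r*n) = ((m+1)*r)^2 * m - 2*((m+1)*r)*(m+1)*n"
    by (simp add: power2_eq_square algebra_simps)
  also have "\<dots> = - (n^2 * (m + 2))" using e by (simp add: power2_eq_square algebra_simps)
  also have "\<dots> < 0" using np m0 by simp
  finally have "(m+1)^2 * (r^2*m - 2*r*n) < 0" .
  moreover have "(m+1)^2 > 0" using m0 by simp
  ultimately show ?thesis by (simp add: mult_less_0_iff)
qed

text \<open>With y = B x, testing positivity on x - r y for r = |y|^2 / (<y|B|y> + 1) forces |y| = 0.\<close>

lemma pos_qform_zero_imp_apply_zero:
  fixes x :: qvec
  assumes fin: "finite X" and p: "is_pos X B" and x: "x \<in> vecs X" and q: "qform X B x = 0"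
  shows "op_apply X B x = (\<lambda>_. 0)"
proof -
  have wf: "wf_op X B" using p by (simp add: is_pos_def)
  have h: "op_adj B = B" using is_pos_op_adj[OF fin p] .
  define y where "y = op_apply X B x"
  have yv: "y \<in> vecs X" unfolding y_def using wf by (rule op_apply_in_vecs)
  have byx: "sesq X B y x = sqnorm X y" unfolding sesq_eq_sum_apply sqnorm_def y_def by simp
  have bxy: "sesq X B x y = sqnorm X y" using sesq_hermitian_swap[OF h, of X x y] byx by (simp add: sqnorm_eq_sum_cmod)
  define n where "n = (\<Sum>s\<in>Pow X. (cmod (y s))^2)"
  have n0: "n \<ge> 0" unfolding n_def by (simp add: sum_nonneg)
  have nn: "sqnorm X y = of_real n" unfolding n_def by (simp add: sqnorm_eq_sum_cmod)
  define m where "m = Re (qform X B y)"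
  have m0: "m \<ge> 0" and mi: "Im (qform X B y) = 0" using p yv unfolding is_pos_def m_def by auto
  have qy: "qform X B y = of_real m" using mi unfolding m_def by (simp add: complex_eq_iff)
  have "n = 0"
  proof (rule ccontr)
    assume "n \<noteq> 0"
    then have npos: "n > 0" using n0 by simp
    define r where "r = n / (m + 1)"
    have "qform X B (\<lambda>u. 1 * x u + (- of_real r) * y u) =
        of_real (r^2 * m - 2 * r * n)"
      unfolding qform_lincomb using q qy bxy byx nn
      by (simp add: qform_eq_sesq[symmetric] algebra_simps power2_eq_square)
    moreover have "(\<lambda>u. 1 * x u + (- of_real r) * y u) \<in> vecs X" using x yv by (rule vecs_lincomb)
    ultimately have "0 \<le> r^2 * m - 2 * r * n" using p unfolding is_pos_def by force
    moreover have "r^2 * m - 2 * r * n < 0" using quadratic_perturbation_neg[OF m0 npos r_def] .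
    ultimately show False by linarith
  qed
  then have "sqnorm X y = 0" using nn by simp
  then show ?thesis using sqnorm_eq_zero[OF fin yv] unfolding y_def by simp
qed

definition op_ker :: "nat set \<Rightarrow> qop \<Rightarrow> qvec set" where
  "op_ker X A = {x \<in> vecs X. op_apply X A x = (\<lambda>_. 0)}"

lemma nullq_pos_eq_ker:
  assumes "finite X" and "is_pos X B"
  shows "nullq X B = op_ker X B"
proof -
  have "qform X B x = 0" if "op_apply X B x = (\<lambda>_. 0)" for x
    using that by (simp add: qform_apply)
  then show ?thesis
    unfolding nullq_def op_ker_def using pos_qform_zero_imp_apply_zero[OF assms] by blast
qed

lemma op_apply_id: "finite X \<Longrightarrow> x \<in> vecs X \<Longrightarrow> op_apply X (id_op X) x = x"
proof (intro ext)
  fix s assume fin: "finite X" and x: "x \<in> vecs X"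
  have "op_apply X (id_op X) x s = (\<Sum>t\<in>Pow X. if t = s then (if s \<subseteq> X then x s else 0) else 0)"
    unfolding op_apply_def id_op_def by (rule sum.cong) auto
  also have "\<dots> = x s" using fin x unfolding vecs_def by (auto simp: sum.delta)
  finally show "op_apply X (id_op X) x s = x s" .
qed

lemma qform_id: "finite X \<Longrightarrow> x \<in> vecs X \<Longrightarrow> qform X (id_op X) x = sqnorm X x"
  unfolding qform_apply sqnorm_def by (simp add: op_apply_id)

lemma qform_diff: "qform X (diff_op A B) x = qform X A x - qform X B x"
  unfolding qform_def diff_op_def by (simp add: algebra_simps sum_subtractf)

lemma qform_scale: "qform X (scale_op c A) x = c * qform X A x"
  unfolding qform_def scale_op_def by (simp add: sum_distrib_left mult_ac)

lemma sqnorm_nonneg: "0 \<le> Re (sqnorm X x) \<and> Im (sqnorm X x) = 0"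
  unfolding sqnorm_eq_sum_cmod by (simp add: sum_nonneg)

lemma is_pos_id: "finite X \<Longrightarrow> is_pos X (id_op X)"
  unfolding is_pos_def using wf_op_id qform_id sqnorm_nonneg by simp

lemma is_pos_scale:
  assumes p: "is_pos X A" and r: "0 \<le> r"
  shows "is_pos X (scale_op (complex_of_real r) A)"
  using p r unfolding is_pos_def by (simp add: qform_scale wf_op_scale)

definition outer :: "qvec \<Rightarrow> qop" where "outer x = (\<lambda>s t. x s * cnj (x t))"

lemma qform_eq_qtr_outer: "qform X T x = qtr X (op_mult X T (outer x))"
  unfolding qform_def qtr_def op_mult_def outer_def
  by (simp add: sum_distrib_left mult_ac)

lemma is_pos_outer:
  assumes x: "x \<in> vecs X"
  shows "is_pos X (outer x)"
  unfolding is_pos_def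
proof (intro conjI ballI)
  show "wf_op X (outer x)" using x unfolding wf_op_def vecs_def outer_def by auto
  fix y assume "y \<in> vecs X"
  define w where "w = (\<Sum>s\<in>Pow X. cnj (y s) * x s)"
  have "qform X (outer x) y = w * cnj w"
    unfolding qform_def outer_def w_def
    by (simp add: sum_distrib_left sum_distrib_right mult_ac) (rule sum.swap)
  also have "\<dots> = of_real ((cmod w)^2)" by (rule complex_norm_square[symmetric])
  finally have e: "qform X (outer x) y = of_real ((cmod w)^2)" .
  show "Im (qform X (outer x) y) = 0" "0 \<le> Re (qform X (outer x) y)" unfolding e by simp_all
qed

lemma qtr_outer: "qtr X (outer x) = sqnorm X x"
  unfolding qtr_def outer_def sqnorm_def by (simp add: mult.commute)

lemma sum_cnj_apply_hermitian:
  assumes h: "op_adj M = M"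
  shows "(\<Sum>s\<in>Pow X. cnj (x s) * op_apply X M z s) = (\<Sum>s\<in>Pow X. cnj (op_apply X M x s) * z s)"
proof -
  have "(\<Sum>s\<in>Pow X. cnj (x s) * op_apply X M z s) = sesq X M x z" by (simp add: sesq_eq_sum_apply)
  also have "\<dots> = cnj (sesq X M z x)" by (rule sesq_hermitian_swap[OF h])
  also have "\<dots> = (\<Sum>s\<in>Pow X. cnj (op_apply X M x s) * z s)"
    by (simp add: sesq_eq_sum_apply mult.commute)
  finally show ?thesis .
qed

definition sandwich :: "nat set \<Rightarrow> qop \<Rightarrow> qop \<Rightarrow> qop" where
  "sandwich X M A = op_mult X (op_mult X M A) M"

lemma qform_sandwich:
  assumes "op_adj M = M"
  shows "qform X (sandwich X M A) x = qform X A (op_apply X M x)"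
  unfolding sandwich_def qform_apply op_apply_mult using sum_cnj_apply_hermitian[OF assms] by simp

lemma is_pos_sandwich:
  assumes p: "is_pos X A" and h: "op_adj M = M" and w: "wf_op X M"
  shows "is_pos X (sandwich X M A)"
proof -
  have "wf_op X (sandwich X M A)" unfolding sandwich_def using p w wf_op_mult unfolding is_pos_def by blast
  then show ?thesis using p w unfolding is_pos_def by (simp add: qform_sandwich[OF h] op_apply_in_vecs)
qed

lemma is_proj_imp_pos:
  assumes fin: "finite X" and p: "is_proj X P"
  shows "is_pos X P"
proof -
  have w: "wf_op X P" and m: "op_mult X P P = P" and h: "op_adj P = P"
    using p unfolding is_proj_def by auto
  have "sandwich X P (id_op X) = P" unfolding sandwich_def using m by (simp add: op_mult_id_right[OF fin w])
  then show ?thesis using is_pos_sandwich[OF is_pos_id[OF fin] h w] by simp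
qed

definition op_col :: "qop \<Rightarrow> nat set \<Rightarrow> qvec" where "op_col A t = (\<lambda>s. A s t)"

lemma op_col_in_vecs: "wf_op X P \<Longrightarrow> op_col P s \<in> vecs X"
  unfolding wf_op_def vecs_def op_col_def by auto

lemma qtr_mult_proj_eq_sum_qform:
  assumes fin: "finite X" and p: "is_proj X P"
  shows "qtr X (op_mult X B P) = (\<Sum>s\<in>Pow X. qform X B (op_col P s))"
proof -
  have m: "op_mult X P P = P" and h: "op_adj P = P" using p unfolding is_proj_def by auto
  have hc: "\<And>a s. cnj (P a s) = P s a" using h unfolding op_adj_def by metis
  have "(\<Sum>s\<in>Pow X. qform X B (op_col P s)) = qtr X (op_mult X (op_mult X P B) P)"
    unfolding qform_def op_col_def qtr_def op_mult_def hc
    by (simp add: sum_distrib_right) (rule sum.cong[OF refl], rule sum.swap)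
  also have "\<dots> = qtr X (op_mult X P (op_mult X B P))" by (simp add: op_mult_assoc)
  also have "\<dots> = qtr X (op_mult X (op_mult X B P) P)" by (rule qtr_op_mult_commute)
  also have "\<dots> = qtr X (op_mult X B P)" by (simp add: op_mult_assoc m)
  finally show ?thesis by simp
qed

lemma qtr_pos_mult_proj_nonneg:
  assumes fin: "finite X" and b: "is_pos X B" and p: "is_proj X P"
  shows "Im (qtr X (op_mult X B P)) = 0 \<and> 0 \<le> Re (qtr X (op_mult X B P))"
proof -
  have w: "wf_op X P" using p unfolding is_proj_def by auto
  have "\<forall>s. Im (qform X B (op_col P s)) = 0 \<and> 0 \<le> Re (qform X B (op_col P s))"
    using b op_col_in_vecs[OF w] unfolding is_pos_def by auto
  then show ?thesis unfolding qtr_mult_proj_eq_sum_qform[OF fin p] by (simp add: Re_sum Im_sum sum_nonneg)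
qed

lemma qtr_proj_nonneg:
  assumes fin: "finite X" and p: "is_proj X P"
  shows "0 \<le> Re (qtr X P)"
proof -
  have w: "wf_op X P" using p unfolding is_proj_def by simp
  have "qtr X P = qtr X (op_mult X (id_op X) P)" by (simp add: op_mult_id_left[OF fin w])
  then show ?thesis using qtr_pos_mult_proj_nonneg[OF fin is_pos_id[OF fin] p] by simp
qed

lemma proj_scaled_pdens:
  assumes fin: "finite X" and p: "is_proj X P"
  obtains c :: real where "0 < c" and "pdens X (scale_op (of_real c) P)"
proof
  define c where "c = 1 / (Re (qtr X P) + 1)"
  have t: "0 \<le> Re (qtr X P)" by (rule qtr_proj_nonneg[OF fin p])
  then show c0: "0 < c" unfolding c_def by simp
  have "Re (qtr X (scale_op (of_real c) P)) \<le> 1"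
    using t unfolding qtr_scale c_def by simp
  moreover have "is_pos X (scale_op (of_real c) P)"
    using is_pos_scale[OF is_proj_imp_pos[OF fin p]] c0 by simp
  ultimately show "pdens X (scale_op (of_real c) P)" unfolding pdens_def by simp
qed

lemma op_mult_eq_apply_col: "op_mult X A B s t = op_apply X A (op_col B t) s"
  unfolding op_mult_def op_apply_def op_col_def by simp

lemma pos_mult_proj_eq_zero_iff:
  assumes fin: "finite X" and b: "is_pos X B" and p: "is_proj X P"
  shows "op_mult X B P = zero_op \<longleftrightarrow> Re (qtr X (op_mult X B P)) \<le> 0"
proof
  assume "Re (qtr X (op_mult X B P)) \<le> 0"
  then have "(\<Sum>s\<in>Pow X. Re (qform X B (op_col P s))) \<le> 0"
    unfolding qtr_mult_proj_eq_sum_qform[OF fin p] by (simp add: Re_sum)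
  moreover have nn: "\<And>s. Im (qform X B (op_col P s)) = 0 \<and> 0 \<le> Re (qform X B (op_col P s))"
    using b op_col_in_vecs p unfolding is_pos_def is_proj_def by blast
  ultimately have "(\<Sum>s\<in>Pow X. Re (qform X B (op_col P s))) = 0"
    by (meson antisym sum_nonneg)
  then have "\<forall>s\<in>Pow X. Re (qform X B (op_col P s)) = 0"
    using fin nn by (subst (asm) sum_nonneg_eq_0_iff) auto
  then have "\<forall>s\<in>Pow X. qform X B (op_col P s) = 0"
    using nn by (simp add: complex_eq_iff)
  then have "\<forall>s\<in>Pow X. op_apply X B (op_col P s) = (\<lambda>_. 0)"
    using pos_qform_zero_imp_apply_zero[OF fin b] op_col_in_vecs p unfolding is_proj_def by blast
  moreover have "\<forall>s. \<not> s \<subseteq> X \<longrightarrow> op_col P s = (\<lambda>_. 0)"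
    using p unfolding is_proj_def wf_op_def op_col_def by auto
  ultimately have "op_apply X B (op_col P t) = (\<lambda>_. 0)" for t
    by (cases "t \<subseteq> X") (auto simp: op_apply_def)
  then show "op_mult X B P = zero_op" by (auto intro!: ext simp: op_mult_eq_apply_col zero_op_def)
qed (simp add: qtr_zero)

lemma op_col_eq_apply_ket: "finite X \<Longrightarrow> t \<subseteq> X \<Longrightarrow> op_col B t = op_apply X B (ket t)"
proof (intro ext)
  fix s assume fin: "finite X" and t: "t \<subseteq> X"
  have "op_apply X B (ket t) s = (\<Sum>u\<in>Pow X. if u = t then B s t else 0)"
    unfolding op_apply_def ket_def by (rule sum.cong) auto
  also have "\<dots> = B s t" using fin t by (simp add: sum.delta)
  finally show "op_col B t s = op_apply X B (ket t) s" by (simp add: op_col_def)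
qed

lemma op_col_in_img: "finite X \<Longrightarrow> t \<subseteq> X \<Longrightarrow> op_col B t \<in> img X B"
  unfolding img_def using op_col_eq_apply_ket ket_in_vecs by auto

lemma op_mult_eq_right_iff_img_subset_eig1:
  assumes fin: "finite X" and w: "wf_op X B"
  shows "op_mult X A B = B \<longleftrightarrow> img X B \<subseteq> eig1 X A"
proof
  assume "op_mult X A B = B"
  then show "img X B \<subseteq> eig1 X A"
    unfolding img_def eig1_def using op_apply_in_vecs[OF w] by (auto simp: op_apply_mult[symmetric])
next
  assume "img X B \<subseteq> eig1 X A"
  then have cols: "op_apply X A (op_col B t) = op_col B t" if "t \<subseteq> X" for t
    using op_col_in_img[OF fin that] unfolding eig1_def by blast
  show "op_mult X A B = B"
  proof (intro ext)
    fix s t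
    show "op_mult X A B s t = B s t"
    proof (cases "t \<subseteq> X")
      case True
      then show ?thesis using cols by (simp add: op_mult_eq_apply_col op_col_def)
    next
      case False
      then show ?thesis using w unfolding wf_op_def op_mult_def by auto
    qed
  qed
qed

lemma op_mult_eq_zero_iff_img_subset_ker:
  assumes fin: "finite X" and w: "wf_op X B"
  shows "op_mult X A B = zero_op \<longleftrightarrow> img X B \<subseteq> op_ker X A"
proof
  assume "op_mult X A B = zero_op"
  then show "img X B \<subseteq> op_ker X A"
    unfolding img_def op_ker_def using op_apply_in_vecs[OF w]
    by (auto simp: op_apply_mult[symmetric] op_apply_zero)
next
  assume "img X B \<subseteq> op_ker X A"
  then have cols: "op_apply X A (op_col B t) = (\<lambda>_. 0)" if "t \<subseteq> X" for t
    using op_col_in_img[OF fin that] unfolding op_ker_def by blast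
  show "op_mult X A B = zero_op"
  proof (intro ext)
    fix s t
    show "op_mult X A B s t = zero_op s t"
    proof (cases "t \<subseteq> X")
      case True
      then show ?thesis using cols by (simp add: op_mult_eq_apply_col op_col_def zero_op_def)
    next
      case False
      then show ?thesis using w unfolding wf_op_def op_mult_def zero_op_def by auto
    qed
  qed
qed

lemma op_mult_proj_perp_eq_zero_iff:
  assumes "finite X" and "wf_op X B"
  shows "op_mult X (proj_perp X A) B = zero_op \<longleftrightarrow> op_mult X A B = B"
  unfolding proj_perp_eq_diff op_mult_diff_left op_mult_id_left[OF assms]
  by (auto simp: diff_op_def zero_op_def fun_eq_iff)

lemma img_proj_eq_eig1:
  assumes "finite X" and "is_proj X P"
  shows "img X P = eig1 X P"
  using op_mult_eq_right_iff_img_subset_eig1[OF assms(1), of P P] assms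
  unfolding is_proj_def img_def eig1_def by (auto intro: image_eqI[where x=x for x, OF sym])

lemma proj_eq_if_img_eq:
  assumes fin: "finite X" and p1: "is_proj X P1" and p2: "is_proj X P2" and e: "img X P1 = img X P2"
  shows "P1 = P2"
proof -
  have w1: "wf_op X P1" and h1: "op_adj P1 = P1" using p1 unfolding is_proj_def by auto
  have w2: "wf_op X P2" and h2: "op_adj P2 = P2" using p2 unfolding is_proj_def by auto
  have "op_mult X P2 P1 = P1"
    using op_mult_eq_right_iff_img_subset_eig1[OF fin w1] img_proj_eq_eig1[OF fin p2] e by simp
  then have "P1 = op_adj (op_mult X P2 P1)" using h1 by simp
  also have "\<dots> = op_mult X P1 P2" by (simp add: op_adj_mult h1 h2)
  also have "\<dots> = P2"
    using op_mult_eq_right_iff_img_subset_eig1[OF fin w2] img_proj_eq_eig1[OF fin p1] e by simp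
  finally show ?thesis .
qed

lemma is_proj_perp:
  assumes fin: "finite X" and p: "is_proj X P"
  shows "is_proj X (proj_perp X P)"
proof -
  have w: "wf_op X P" and m: "op_mult X P P = P" and h: "op_adj P = P"
    using p unfolding is_proj_def by auto
  have "op_mult X (diff_op (id_op X) P) (diff_op (id_op X) P) = diff_op (id_op X) P"
    unfolding op_mult_diff_left op_mult_diff_right
    by (simp add: op_mult_id_left[OF fin] op_mult_id_right[OF fin] w wf_op_id m diff_op_def)
  then show ?thesis unfolding is_proj_def proj_perp_eq_diff
    using w wf_op_id by (simp add: wf_op_diff op_adj_diff op_adj_id h)
qed

lemma op_mult_proj_perp:
  assumes fin: "finite X" and p: "is_proj X P"
  shows "op_mult X P (proj_perp X P) = zero_op"
proof -
  have wp: "wf_op X P" and m: "op_mult X P P = P" using p unfolding is_proj_def by auto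
  show ?thesis unfolding proj_perp_eq_diff op_mult_diff_right
    by (simp add: op_mult_id_right[OF fin wp] m diff_op_def zero_op_def)
qed

lemma qtr_proj_mult_pos_bounds:
  assumes fin: "finite X" and z: "is_proj X Z" and s: "is_pos X \<sigma>"
  shows "Im (qtr X (op_mult X Z \<sigma>)) = 0 \<and> 0 \<le> Re (qtr X (op_mult X Z \<sigma>)) \<and>
         Re (qtr X (op_mult X Z \<sigma>)) \<le> Re (qtr X \<sigma>)"
proof -
  have ws: "wf_op X \<sigma>" using s unfolding is_pos_def by simp
  have a: "Im (qtr X (op_mult X \<sigma> Z)) = 0 \<and> 0 \<le> Re (qtr X (op_mult X \<sigma> Z))"
    by (rule qtr_pos_mult_proj_nonneg[OF fin s z])
  have b: "0 \<le> Re (qtr X (op_mult X \<sigma> (proj_perp X Z)))"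
    using qtr_pos_mult_proj_nonneg[OF fin s is_proj_perp[OF fin z]] by simp
  have "qtr X (op_mult X \<sigma> (proj_perp X Z)) = qtr X \<sigma> - qtr X (op_mult X \<sigma> Z)"
    unfolding proj_perp_eq_diff op_mult_diff_right qtr_diff by (simp add: op_mult_id_right[OF fin ws])
  then show ?thesis using a b by (simp add: qtr_op_mult_commute[of X Z])
qed

lemma is_pos_sandwich_perp:
  assumes "finite X" and "is_proj X P" and "is_pos X \<rho>"
  shows "is_pos X (sandwich X (proj_perp X P) \<rho>)"
  using is_pos_sandwich[OF assms(3)] is_proj_perp[OF assms(1,2)] unfolding is_proj_def by simp

lemma qtr_sandwich_perp:
  assumes fin: "finite X" and p: "is_proj X P" and w: "wf_op X \<rho>"
  shows "qtr X (sandwich X (proj_perp X P) \<rho>) = qtr X \<rho> - qtr X (op_mult X P \<rho>)"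
proof -
  have m: "op_mult X (proj_perp X P) (proj_perp X P) = proj_perp X P"
    using is_proj_perp[OF fin p] unfolding is_proj_def by simp
  have "qtr X (sandwich X (proj_perp X P) \<rho>) = qtr X (op_mult X (proj_perp X P) (op_mult X (proj_perp X P) \<rho>))"
    unfolding sandwich_def by (rule qtr_op_mult_commute)
  also have "\<dots> = qtr X (op_mult X (proj_perp X P) \<rho>)" by (simp add: op_mult_assoc[symmetric] m)
  finally show ?thesis by (simp add: qtr_proj_perp_mult[OF fin w])
qed

lemma qtr_mult_eq_sandwich_perp:
  assumes fin: "finite X" and w: "wf_op X A"
    and ap: "op_mult X A P = zero_op" and pa: "op_mult X P A = zero_op"
  shows "qtr X (op_mult X A \<rho>) = qtr X (op_mult X A (sandwich X (proj_perp X P) \<rho>))"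
proof -
  let ?P' = "proj_perp X P"
  have "op_mult X ?P' A = A" "op_mult X A ?P' = A"
    unfolding proj_perp_eq_diff op_mult_diff_left op_mult_diff_right
    by (simp_all add: op_mult_id_left[OF fin w] op_mult_id_right[OF fin w] ap pa diff_op_def zero_op_def)
  then have "qtr X (op_mult X A \<rho>) = qtr X (op_mult X ?P' (op_mult X A (op_mult X ?P' \<rho>)))"
    by (simp add: op_mult_assoc[symmetric])
  also have "\<dots> = qtr X (op_mult X A (sandwich X ?P' \<rho>))"
    unfolding sandwich_def by (subst qtr_op_mult_commute) (simp add: op_mult_assoc)
  finally show ?thesis .
qed

lemma qtr_mult_eq_proj_add_sandwich_perp:
  assumes fin: "finite X" and p: "is_proj X P" and w: "wf_op X A"
    and ap: "op_mult X A P = P" and pa: "op_mult X P A = P"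
  shows "qtr X (op_mult X A \<rho>) = qtr X (op_mult X P \<rho>) + qtr X (op_mult X A (sandwich X (proj_perp X P) \<rho>))"
proof -
  have wp: "wf_op X P" and m: "op_mult X P P = P" using p unfolding is_proj_def by auto
  have "qtr X (op_mult X (diff_op A P) \<rho>) = qtr X (op_mult X (diff_op A P) (sandwich X (proj_perp X P) \<rho>))"
    using ap pa m
    by (intro qtr_mult_eq_sandwich_perp[OF fin wf_op_diff[OF w wp]])
       (simp_all add: op_mult_diff_left op_mult_diff_right, simp_all add: diff_op_def zero_op_def)
  moreover have "qtr X (op_mult X P (sandwich X (proj_perp X P) \<rho>)) = 0"
    unfolding sandwich_def op_mult_assoc[symmetric] op_mult_proj_perp[OF fin p]
    by (simp add: op_mult_zero_left qtr_zero)
  ultimately show ?thesis unfolding op_mult_diff_left qtr_diff by (simp add: algebra_simps)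
qed

section \<open>Subspaces\<close>

definition is_subspace :: "nat set \<Rightarrow> qvec set \<Rightarrow> bool" where
  "is_subspace X S \<longleftrightarrow> S \<subseteq> vecs X \<and> (\<lambda>_. 0) \<in> S \<and> (\<forall>x\<in>S. \<forall>y\<in>S. (\<lambda>s. x s + y s) \<in> S) \<and>
     (\<forall>c. \<forall>x\<in>S. (\<lambda>s. c * x s) \<in> S)"

lemma subspace_lincomb:
  assumes S: "is_subspace X S" and x: "x \<in> S" and y: "y \<in> S"
  shows "(\<lambda>s. a * x s + b * y s) \<in> S"
proof -
  have ad: "\<forall>x\<in>S. \<forall>y\<in>S. (\<lambda>s. x s + y s) \<in> S" and sc: "\<forall>c. \<forall>x\<in>S. (\<lambda>s. c * x s) \<in> S"
    using S unfolding is_subspace_def by simp_all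
  have "(\<lambda>s. a * x s) \<in> S" using sc x by simp
  moreover have "(\<lambda>s. b * y s) \<in> S" using sc y by simp
  ultimately have "(\<lambda>s. (\<lambda>s. a * x s) s + (\<lambda>s. b * y s) s) \<in> S" using ad by simp
  then show ?thesis by simp
qed

lemma is_subspace_eig1: "is_subspace X (eig1 X A)"
  unfolding is_subspace_def eig1_def
proof (intro conjI ballI allI)
  show "{x \<in> vecs X. op_apply X A x = x} \<subseteq> vecs X" by auto
  show "(\<lambda>_. 0) \<in> {x \<in> vecs X. op_apply X A x = x}" unfolding vecs_def op_apply_def by auto
  fix x y c assume x: "x \<in> {x \<in> vecs X. op_apply X A x = x}"
  show "(\<lambda>s. c * x s) \<in> {x \<in> vecs X. op_apply X A x = x}"
    using x unfolding vecs_def by (simp add: op_apply_scale)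
  assume y: "y \<in> {x \<in> vecs X. op_apply X A x = x}"
  have "op_apply X A (\<lambda>s. x s + 1 * y s) = (\<lambda>s. x s + 1 * y s)"
    using x y by (simp only: op_apply_add_scale) simp
  then show "(\<lambda>s. x s + y s) \<in> {x \<in> vecs X. op_apply X A x = x}"
    using x y unfolding vecs_def by simp
qed

lemma is_subspace_ker: "is_subspace X (op_ker X A)"
  unfolding is_subspace_def op_ker_def
proof (intro conjI ballI allI)
  show "(\<lambda>_. 0) \<in> {x \<in> vecs X. op_apply X A x = (\<lambda>_. 0)}" unfolding vecs_def op_apply_def by auto
  fix x y c assume x: "x \<in> {x \<in> vecs X. op_apply X A x = (\<lambda>_. 0)}"
  then show "(\<lambda>s. c * x s) \<in> {x \<in> vecs X. op_apply X A x = (\<lambda>_. 0)}"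
    unfolding vecs_def by (simp add: op_apply_scale)
  assume y: "y \<in> {x \<in> vecs X. op_apply X A x = (\<lambda>_. 0)}"
  have "op_apply X A (\<lambda>s. x s + 1 * y s) = (\<lambda>_. 0)"
    using x y by (simp only: op_apply_add_scale) simp
  then show "(\<lambda>s. x s + y s) \<in> {x \<in> vecs X. op_apply X A x = (\<lambda>_. 0)}"
    using x y unfolding vecs_def by simp
qed auto

lemma is_subspace_nullq_pos: "finite X \<Longrightarrow> is_pos X B \<Longrightarrow> is_subspace X (nullq X B)"
  using nullq_pos_eq_ker is_subspace_ker by simp

lemma is_subspace_INT:
  assumes ne: "I \<noteq> {}" and S: "\<And>i. i \<in> I \<Longrightarrow> is_subspace X (f i)"
  shows "is_subspace X (\<Inter>i\<in>I. f i)"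
  unfolding is_subspace_def
proof (intro conjI ballI allI INT_I)
  show "(\<Inter>i\<in>I. f i) \<subseteq> vecs X" using ne S unfolding is_subspace_def by fast
next
  fix i assume "i \<in> I"
  then show "(\<lambda>_. 0) \<in> f i" using S unfolding is_subspace_def by simp
next
  fix x y i assume "x \<in> (\<Inter>i\<in>I. f i)" "y \<in> (\<Inter>i\<in>I. f i)" "i \<in> I"
  then show "(\<lambda>s. x s + y s) \<in> f i" using S unfolding is_subspace_def by simp
next
  fix c x i assume "x \<in> (\<Inter>i\<in>I. f i)" "i \<in> I"
  then show "(\<lambda>s. c * x s) \<in> f i" using S unfolding is_subspace_def by simp
qed

lemma is_subspace_img_proj: "finite X \<Longrightarrow> is_proj X P \<Longrightarrow> is_subspace X (img X P)"
  using img_proj_eq_eig1 is_subspace_eig1 by simp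

lemma cspan_step:
  assumes z: "z \<in> cspan U" and u: "u \<in> U"
  shows "(\<lambda>s. z s + a * u s) \<in> cspan U"
proof -
  obtain n :: nat and c v where zd: "z = (\<lambda>s. \<Sum>i<n. c i * v i s)" and vU: "\<forall>i<n. v i \<in> U"
    using z unfolding cspan_def by blast
  define c' where "c' = c(n := a)"
  define v' where "v' = v(n := u)"
  have "(\<lambda>s. z s + a * u s) = (\<lambda>s. \<Sum>i<Suc n. c' i * v' i s)"
    unfolding zd c'_def v'_def by (auto intro!: ext sum.cong)
  moreover have "\<forall>i<Suc n. v' i \<in> U" using vU u unfolding v'_def by (auto simp: less_Suc_eq)
  ultimately show ?thesis unfolding cspan_def by blast
qed

lemma cspan_zero: "(\<lambda>_. 0) \<in> cspan U"
  unfolding cspan_def by (rule CollectI) (rule exI[of _ "0::nat"], auto)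

lemma cspan_base: "u \<in> U \<Longrightarrow> u \<in> cspan U"
  using cspan_step[OF cspan_zero, of u U 1] by simp

lemma cspan_add:
  assumes x: "x \<in> cspan U" and y: "y \<in> cspan U"
  shows "(\<lambda>s. x s + y s) \<in> cspan U"
proof -
  obtain n :: nat and c v where yd: "y = (\<lambda>s. \<Sum>i<n. c i * v i s)" and vU: "\<forall>i<n. v i \<in> U"
    using y unfolding cspan_def by blast
  have "\<forall>m\<le>n. (\<lambda>s. x s + (\<Sum>i<m. c i * v i s)) \<in> cspan U"
  proof (intro allI impI)
    fix m show "m \<le> n \<Longrightarrow> (\<lambda>s. x s + (\<Sum>i<m. c i * v i s)) \<in> cspan U"
    proof (induction m)
      case 0 then show ?case using x by simp
    next
      case (Suc m)
      then have "(\<lambda>s. x s + (\<Sum>i<m. c i * v i s)) \<in> cspan U" by simp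
      moreover have "v m \<in> U" using vU Suc by simp
      ultimately have "(\<lambda>s. (\<lambda>s. x s + (\<Sum>i<m. c i * v i s)) s + c m * v m s) \<in> cspan U"
        by (rule cspan_step)
      then show ?case by (simp add: add.assoc)
    qed
  qed
  then show ?thesis unfolding yd by simp
qed

lemma cspan_scale:
  assumes x: "x \<in> cspan U"
  shows "(\<lambda>s. a * x s) \<in> cspan U"
proof -
  obtain n :: nat and c v where xd: "x = (\<lambda>s. \<Sum>i<n. c i * v i s)" and vU: "\<forall>i<n. v i \<in> U"
    using x unfolding cspan_def by blast
  have "(\<lambda>s. a * x s) = (\<lambda>s. \<Sum>i<n. (\<lambda>i. a * c i) i * v i s)"
    unfolding xd by (simp add: sum_distrib_left mult.assoc)
  then show ?thesis using vU unfolding cspan_def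
    by (intro CollectI) (rule exI[of _ n], rule exI[of _ "\<lambda>i. a * c i"], rule exI[of _ v], simp)
qed

lemma cspan_subset_vecs:
  assumes U: "U \<subseteq> vecs X"
  shows "cspan U \<subseteq> vecs X"
proof
  fix x assume "x \<in> cspan U"
  then obtain n :: nat and c v where xd: "x = (\<lambda>s. \<Sum>i<n. c i * v i s)" and vU: "\<forall>i<n. v i \<in> U"
    unfolding cspan_def by blast
  have "\<And>s. \<not> s \<subseteq> X \<Longrightarrow> x s = 0"
  proof -
    fix s assume s: "\<not> s \<subseteq> X"
    have "\<And>i. i < n \<Longrightarrow> v i s = 0" using vU U s unfolding vecs_def by blast
    then show "x s = 0" unfolding xd by simp
  qed
  then show "x \<in> vecs X" unfolding vecs_def by simp
qed

lemma is_subspace_cspan: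
  assumes U: "U \<subseteq> vecs X"
  shows "is_subspace X (cspan U)"
  unfolding is_subspace_def
proof (intro conjI ballI allI)
  show "cspan U \<subseteq> vecs X" by (rule cspan_subset_vecs[OF U])
  show "(\<lambda>_. 0) \<in> cspan U" by (rule cspan_zero)
  fix x y c assume x: "x \<in> cspan U"
  show "(\<lambda>s. c * x s) \<in> cspan U" by (rule cspan_scale[OF x])
  assume y: "y \<in> cspan U"
  show "(\<lambda>s. x s + y s) \<in> cspan U" by (rule cspan_add[OF x y])
qed

lemma cspan_minimal:
  assumes S: "is_subspace X S" and U: "U \<subseteq> S"
  shows "cspan U \<subseteq> S"
proof
  fix x assume "x \<in> cspan U"
  then obtain n :: nat and c v where xd: "x = (\<lambda>s. \<Sum>i<n. c i * v i s)" and vU: "\<forall>i<n. v i \<in> U"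
    unfolding cspan_def by blast
  have "\<forall>m\<le>n. (\<lambda>s. \<Sum>i<m. c i * v i s) \<in> S"
  proof (intro allI impI)
    fix m show "m \<le> n \<Longrightarrow> (\<lambda>s. \<Sum>i<m. c i * v i s) \<in> S"
    proof (induction m)
      case 0 then show ?case using S unfolding is_subspace_def by simp
    next
      case (Suc m)
      then have a: "(\<lambda>s. \<Sum>i<m. c i * v i s) \<in> S" by simp
      have "v m \<in> S" using vU Suc U by auto
      then have "(\<lambda>s. 1 * (\<lambda>s. \<Sum>i<m. c i * v i s) s + c m * v m s) \<in> S" by (rule subspace_lincomb[OF S a])
      then show ?case by simp
    qed
  qed
  then show "x \<in> S" unfolding xd by simp
qed

lemma proj_diag_le_1:
  assumes fin: "finite X" and p: "is_proj X P" and s: "s \<subseteq> X"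
  shows "Re (P s s) \<le> 1"
proof -
  have w: "wf_op X P" and m: "op_mult X P P = P" and h: "op_adj P = P" using p unfolding is_proj_def by auto
  have hc: "\<And>a b. P a b = cnj (P b a)"
  proof -
    fix a b have "op_adj P a b = P a b" using h by simp
    then show "P a b = cnj (P b a)" unfolding op_adj_def by simp
  qed
  have "op_mult X P P s s = P s s" using m by simp
  then have "P s s = (\<Sum>u\<in>Pow X. P s u * P u s)" unfolding op_mult_def by simp
  also have "\<dots> = sqnorm X (op_col P s)" unfolding sqnorm_def op_col_def by (subst hc) (simp add: mult.commute)
  also have "\<dots> = of_real (\<Sum>u\<in>Pow X. (cmod (P u s))^2)" unfolding sqnorm_eq_sum_cmod op_col_def ..
  finally have e: "P s s = of_real (\<Sum>u\<in>Pow X. (cmod (P u s))^2)" .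
  define r where "r = (\<Sum>u\<in>Pow X. (cmod (P u s))^2)"
  have e': "P s s = of_real r" using e by (simp only: r_def)
  have "(cmod (P s s))^2 \<le> r" unfolding r_def using s fin
    by (intro member_le_sum) auto
  moreover have "cmod (P s s) = \<bar>r\<bar>" by (simp only: e' norm_of_real)
  moreover have "r \<ge> 0" unfolding r_def by (simp add: sum_nonneg)
  ultimately have "r^2 \<le> r" by simp
  have "r \<le> 1"
  proof (rule ccontr)
    assume "\<not> r \<le> 1"
    then have "1 * r < r * r" using mult_strict_right_mono[of 1 r r] by simp
    then show False using \<open>r^2 \<le> r\<close> by (simp add: power2_eq_square)
  qed
  then show ?thesis using e' by simp
qed

lemma qtr_proj_le_card:
  assumes fin: "finite X" and p: "is_proj X P"
  shows "Re (qtr X P) \<le> real (card (Pow X))"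
proof -
  have "Re (qtr X P) = (\<Sum>s\<in>Pow X. Re (P s s))" unfolding qtr_def by (simp add: Re_sum)
  also have "\<dots> \<le> (\<Sum>s\<in>Pow X. 1)" by (rule sum_mono) (auto intro: proj_diag_le_1[OF fin p])
  finally show ?thesis by simp
qed

lemma op_mult_outer_self: "op_mult X (outer w) (outer w) = scale_op (sqnorm X w) (outer w)"
  unfolding op_mult_def outer_def scale_op_def sqnorm_def
  by (auto intro!: ext simp: sum_distrib_left sum_distrib_right mult_ac)

lemma op_mult_proj_outer_eq_zero:
  assumes p: "is_proj X P" and pw: "op_apply X P w = (\<lambda>_. 0)"
  shows "op_mult X P (outer w) = zero_op" and "op_mult X (outer w) P = zero_op"
proof -
  have hc: "cnj (P a b) = P b a" for a b
    using p unfolding is_proj_def op_adj_def by (metis complex_cnj_cnj)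
  have "op_mult X P (outer w) s t = op_apply X P w s * cnj (w t)" for s t
    unfolding op_mult_def outer_def op_apply_def by (simp add: sum_distrib_right mult.assoc)
  then show "op_mult X P (outer w) = zero_op" using pw by (auto simp: zero_op_def)
  have "op_mult X (outer w) P s t = w s * cnj (op_apply X P w t)" for s t
    unfolding op_mult_def outer_def op_apply_def by (simp add: sum_distrib_left mult_ac hc)
  then show "op_mult X (outer w) P = zero_op" using pw by (auto simp: zero_op_def)
qed

lemma is_proj_add_outer:
  assumes p: "is_proj X P" and w: "w \<in> vecs X" and pw: "op_apply X P w = (\<lambda>_. 0)"
    and n: "sqnorm X w \<noteq> 0"
  shows "is_proj X (add_op P (scale_op (1 / sqnorm X w) (outer w)))"
proof -
  let ?c = "1 / sqnorm X w"
  have wP: "wf_op X P" and m: "op_mult X P P = P" and h: "op_adj P = P"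
    using p unfolding is_proj_def by auto
  have wr: "wf_op X (outer w)" using w unfolding wf_op_def vecs_def outer_def by auto
  have cc: "?c * (?c * (sqnorm X w * z)) = ?c * z" for z using n by (simp add: field_simps)
  have "op_mult X (add_op P (scale_op ?c (outer w))) (add_op P (scale_op ?c (outer w)))
      = add_op P (scale_op ?c (outer w))"
    unfolding op_mult_add_left op_mult_add_right op_mult_scale_left op_mult_scale_right
      op_mult_proj_outer_eq_zero[OF p pw] m op_mult_outer_self
    using n by (simp add: add_op_def scale_op_def zero_op_def cc)
  moreover have "op_adj (add_op P (scale_op ?c (outer w))) = add_op P (scale_op ?c (outer w))"
    unfolding op_adj_add h
    by (rule arg_cong[where f = "add_op P"]) (simp add: op_adj_def scale_op_def outer_def sqnorm_def mult.commute)
  ultimately show ?thesis unfolding is_proj_def by (simp add: wf_op_add wf_op_scale wP wr)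
qed

lemma proj_extend_within_subspace:
  assumes fin: "finite X" and S: "is_subspace X S" and p: "is_proj X P"
    and iS: "img X P \<subseteq> S" and ne: "img X P \<noteq> S"
  obtains P' where "is_proj X P'" and "img X P' \<subseteq> S" and "Re (qtr X P') = Re (qtr X P) + 1"
proof -
  have Sv: "S \<subseteq> vecs X" using S unfolding is_subspace_def by simp
  have m: "op_mult X P P = P" using p unfolding is_proj_def by simp
  have PS: "op_apply X P y \<in> S" if "y \<in> vecs X" for y
    using iS imageI[OF that, of "op_apply X P"] unfolding img_def by auto
  obtain x where xS: "x \<in> S" and xn: "x \<notin> img X P" using iS ne by auto
  have xv: "x \<in> vecs X" using xS Sv by auto
  define w where "w = (\<lambda>s. 1 * x s + (-1) * op_apply X P x s)"
  have wS: "w \<in> S" unfolding w_def by (rule subspace_lincomb[OF S xS PS[OF xv]])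
  have wv: "w \<in> vecs X" using wS Sv by auto
  have pw: "op_apply X P w = (\<lambda>_. 0)"
    unfolding w_def using op_apply_add_scale[of X P x "-1" "op_apply X P x"]
    by (simp add: op_apply_mult[symmetric] m)
  have "w \<noteq> (\<lambda>_. 0)"
  proof
    assume "w = (\<lambda>_. 0)"
    then have "x s = op_apply X P x s" for s
      unfolding w_def by (metis (no_types) fun_cong right_minus_eq mult_1 mult_minus1 diff_conv_add_uminus)
    then show False using xn xv img_proj_eq_eig1[OF fin p] unfolding eig1_def by auto
  qed
  then have n: "sqnorm X w \<noteq> 0" using sqnorm_eq_zero[OF fin wv] by auto
  define P' where "P' = add_op P (scale_op (1 / sqnorm X w) (outer w))"
  show ?thesis
  proof
    show "is_proj X P'" unfolding P'_def by (rule is_proj_add_outer[OF p wv pw n])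
    show "Re (qtr X P') = Re (qtr X P) + 1"
      unfolding P'_def qtr_add qtr_scale qtr_outer using n by simp
    have "op_apply X P' y \<in> S" if "y \<in> vecs X" for y
    proof -
      have "(\<lambda>s. 1 * op_apply X P y s + ((\<Sum>u\<in>Pow X. cnj (w u) * y u) / sqnorm X w) * w s) \<in> S"
        by (rule subspace_lincomb[OF S PS[OF that] wS])
      then show ?thesis
        unfolding P'_def op_apply_def add_op_def scale_op_def outer_def
        by (simp add: algebra_simps sum.distrib sum_distrib_left sum_divide_distrib)
    qed
    then show "img X P' \<subseteq> S" unfolding img_def by auto
  qed
qed

lemma img_zero_op: "img X zero_op \<subseteq> {\<lambda>_. 0}"
  unfolding img_def op_apply_def zero_op_def by auto

lemma is_proj_zero: "is_proj X zero_op"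
  unfolding is_proj_def by (simp add: wf_op_zero op_mult_zero_left) (auto simp: op_adj_def zero_op_def)

text \<open>A projector onto a subspace is grown one dimension at a time; its trace is bounded by
  card (Pow X) = dim H_X, so the process reaches the whole subspace.\<close>

lemma subspace_eq_img_proj:
  assumes fin: "finite X" and S: "is_subspace X S"
  obtains P where "is_proj X P" and "img X P = S"
proof -
  have "\<exists>P. is_proj X P \<and> img X P \<subseteq> S \<and> (img X P = S \<or> real k \<le> Re (qtr X P))" for k
  proof (induction k)
    case 0
    have "img X zero_op \<subseteq> S" using img_zero_op S unfolding is_subspace_def by blast
    then show ?case using is_proj_zero[of X] by (intro exI[of _ zero_op]) (auto simp: qtr_zero)
  next
    case (Suc k)
    then obtain P where p: "is_proj X P" and iS: "img X P \<subseteq> S"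
      and c: "img X P = S \<or> real k \<le> Re (qtr X P)" by blast
    show ?case
    proof (cases "img X P = S")
      case False
      then obtain P' where "is_proj X P'" "img X P' \<subseteq> S" "Re (qtr X P') = Re (qtr X P) + 1"
        using proj_extend_within_subspace[OF fin S p iS] by blast
      then show ?thesis using c False by (intro exI[of _ P']) auto
    qed (use p in blast)
  qed
  then obtain P where "is_proj X P" "img X P = S \<or> real (Suc (card (Pow X))) \<le> Re (qtr X P)"
    by blast
  then show ?thesis using that qtr_proj_le_card[OF fin] by force
qed

section \<open>Extension to larger sets of variables\<close>

lemma bij_betw_union_Pow_split:
  assumes "Y \<subseteq> X"
  shows "bij_betw (\<lambda>(u, a). u \<union> a) (Pow Y \<times> Pow (X - Y)) (Pow X)"
  by (rule bij_betw_byWitness[where f' = "\<lambda>s. (s \<inter> Y, s - Y)"]) (use assms in auto)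

lemma sum_Pow_split:
  assumes fin: "finite X" and YX: "Y \<subseteq> X"
  shows "(\<Sum>s\<in>Pow X. f s) = (\<Sum>a\<in>Pow (X - Y). \<Sum>u\<in>Pow Y. f (u \<union> a))"
proof -
  have "(\<Sum>s\<in>Pow X. f s) = (\<Sum>p\<in>Pow Y \<times> Pow (X - Y). f ((\<lambda>(u, a). u \<union> a) p))"
    using sum.reindex_bij_betw[OF bij_betw_union_Pow_split[OF YX], of f] by simp
  also have "\<dots> = (\<Sum>u\<in>Pow Y. \<Sum>a\<in>Pow (X - Y). f (u \<union> a))"
    by (simp add: sum.cartesian_product split_def)
  also have "\<dots> = (\<Sum>a\<in>Pow (X - Y). \<Sum>u\<in>Pow Y. f (u \<union> a))" by (rule sum.swap)
  finally show ?thesis .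
qed

lemma sum_Pow_fixed_env:
  assumes fin: "finite X" and VX: "V \<subseteq> X" and a: "a \<subseteq> X - V"
    and z: "\<And>s. s \<subseteq> X \<Longrightarrow> s - V \<noteq> a \<Longrightarrow> f s = 0"
  shows "(\<Sum>s\<in>Pow X. f s) = (\<Sum>u\<in>Pow V. f (u \<union> a))"
proof -
  have "(\<Sum>s\<in>Pow X. f s) = (\<Sum>b\<in>Pow (X - V). \<Sum>u\<in>Pow V. f (u \<union> b))"
    by (rule sum_Pow_split[OF fin VX])
  also have "\<dots> = (\<Sum>b\<in>Pow (X - V). if b = a then (\<Sum>u\<in>Pow V. f (u \<union> a)) else 0)"
  proof (rule sum.cong[OF refl])
    fix b assume b: "b \<in> Pow (X - V)"
    show "(\<Sum>u\<in>Pow V. f (u \<union> b)) = (if b = a then (\<Sum>u\<in>Pow V. f (u \<union> a)) else 0)"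
    proof (cases "b = a")
      case False
      have "\<And>u. u \<in> Pow V \<Longrightarrow> f (u \<union> b) = 0"
      proof -
        fix u assume "u \<in> Pow V"
        then have "u \<union> b \<subseteq> X" "(u \<union> b) - V = b" using b VX by auto
        then show "f (u \<union> b) = 0" using z False by simp
      qed
      then show ?thesis using False by simp
    qed simp
  qed
  also have "\<dots> = (\<Sum>u\<in>Pow V. f (u \<union> a))" using fin a by (simp add: sum.delta)
  finally show ?thesis .
qed

lemma wf_ext_op: "wf_op X (ext_op Y X A)"
  unfolding wf_op_def ext_op_def by auto

lemma ext_op_self: "wf_op Y A \<Longrightarrow> ext_op Y Y A = A"
proof (intro ext)
  fix s t assume w: "wf_op Y A"
  show "ext_op Y Y A s t = A s t"
  proof (cases "s \<subseteq> Y \<and> t \<subseteq> Y")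
    case True then have "s - Y = t - Y" "s \<inter> Y = s" "t \<inter> Y = t" by auto
    then show ?thesis using True unfolding ext_op_def by simp
  next
    case False then show ?thesis using w unfolding ext_op_def wf_op_def by auto
  qed
qed

lemma op_adj_ext_op: "op_adj (ext_op Y X A) = ext_op Y X (op_adj A)"
  unfolding op_adj_def ext_op_def by (auto intro!: ext)

lemma ext_op_diff: "ext_op Y X (diff_op A B) = diff_op (ext_op Y X A) (ext_op Y X B)"
  unfolding diff_op_def ext_op_def by (auto intro!: ext)

lemma ext_op_zero: "ext_op Y X zero_op = zero_op"
  unfolding zero_op_def ext_op_def by (auto intro!: ext)

lemma ext_op_id:
  assumes "Y \<subseteq> X"
  shows "ext_op Y X (id_op Y) = id_op X"
proof (intro ext)
  fix s t
  have "(s - Y = t - Y \<and> s \<inter> Y = t \<inter> Y) = (s = t)" by blast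
  then show "ext_op Y X (id_op Y) s t = id_op X s t"
    unfolding ext_op_def id_op_def by auto
qed

lemma op_mult_ext_op:
  assumes fin: "finite X" and YX: "Y \<subseteq> X"
  shows "op_mult X (ext_op Y X A) (ext_op Y X B) = ext_op Y X (op_mult Y A B)"
proof (intro ext)
  fix s t
  show "op_mult X (ext_op Y X A) (ext_op Y X B) s t = ext_op Y X (op_mult Y A B) s t"
  proof (cases "s \<subseteq> X")
    case True
    have v: "(v \<union> (s - Y)) \<inter> Y = v" "(v \<union> (s - Y)) - Y = s - Y" "v \<union> (s - Y) \<subseteq> X" if "v \<subseteq> Y" for v
      using that True YX by auto
    have "op_mult X (ext_op Y X A) (ext_op Y X B) s t =
        (\<Sum>v\<in>Pow Y. ext_op Y X A s (v \<union> (s - Y)) * ext_op Y X B (v \<union> (s - Y)) t)"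
      unfolding op_mult_def using True by (intro sum_Pow_fixed_env[OF fin YX]) (auto simp: ext_op_def)
    also have "\<dots> = ext_op Y X (op_mult Y A B) s t"
    proof (cases "t \<subseteq> X \<and> s - Y = t - Y")
      case True
      then show ?thesis using \<open>s \<subseteq> X\<close> v by (auto simp: ext_op_def op_mult_def intro!: sum.cong)
    next
      case False
      then have "ext_op Y X B (v \<union> (s - Y)) t = 0" if "v \<subseteq> Y" for v
        using v[OF that] by (auto simp: ext_op_def)
      then show ?thesis using False by (auto simp: ext_op_def intro!: sum.neutral)
    qed
    finally show ?thesis .
  next
    case False
    then show ?thesis by (simp add: op_mult_def ext_op_def)
  qed
qed

lemma is_proj_ext_op:
  assumes fin: "finite X" and YX: "Y \<subseteq> X" and p: "is_proj Y P"
  shows "is_proj X (ext_op Y X P)"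
  using p unfolding is_proj_def by (simp add: wf_ext_op op_mult_ext_op[OF fin YX] op_adj_ext_op)

lemma ext_op_proj_perp:
  assumes YX: "Y \<subseteq> X"
  shows "ext_op Y X (proj_perp Y P) = proj_perp X (ext_op Y X P)"
  unfolding proj_perp_eq_diff ext_op_diff ext_op_id[OF YX] ..

section \<open>Programs and duality\<close>

definition matrix_unit :: "nat set \<Rightarrow> nat set \<Rightarrow> qop" where
  "matrix_unit u v = (\<lambda>a b. if a = u \<and> b = v then 1 else 0)"

lemma dprog_restr: "is_dprog V E \<Longrightarrow> E A = E (restr_op V A)"
  unfolding is_dprog_def by (elim conjE) (erule spec)

lemma dprog_linear: "is_dprog V E \<Longrightarrow> E (\<lambda>s t. c * A s t + B s t) = (\<lambda>s t. c * E A s t + E B s t)"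
  unfolding is_dprog_def by (elim conjE) (erule allE)+

lemma dprog_ext_sop_pos: "is_dprog V E \<Longrightarrow> finite X \<Longrightarrow> V \<subseteq> X \<Longrightarrow> is_pos X \<rho> \<Longrightarrow> is_pos X (ext_sop V X E \<rho>)"
  unfolding is_dprog_def by (elim conjE) (simp only: simp_thms)

lemma dprog_qtr_le: "is_dprog V E \<Longrightarrow> is_pos V \<rho> \<Longrightarrow> Re (qtr V (E \<rho>)) \<le> Re (qtr V \<rho>)"
  unfolding is_dprog_def by (elim conjE) (erule allE, erule mp)

lemma dprog_zero:
  assumes "is_dprog V E"
  shows "E (\<lambda>s t. 0) = (\<lambda>s t. 0)"
proof -
  have "E (\<lambda>s t. 0) s t = E (\<lambda>s t. 0) s t + E (\<lambda>s t. 0) s t" for s t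
    using fun_cong[OF fun_cong[OF dprog_linear[OF assms, of 1 "\<lambda>s t. 0" "\<lambda>s t. 0"], of s], of t] by simp
  then show ?thesis by (simp add: fun_eq_iff)
qed

lemma dprog_sum:
  assumes d: "is_dprog V E" and fin: "finite F"
  shows "E (\<lambda>a b. \<Sum>p\<in>F. f p * G p a b) = (\<lambda>a b. \<Sum>p\<in>F. f p * E (G p) a b)"
  using fin
proof (induction F rule: finite_induct)
  case empty
  then show ?case using dprog_zero[OF d] by simp
next
  case (insert x F)
  have "E (\<lambda>a b. \<Sum>p\<in>insert x F. f p * G p a b) =
        E (\<lambda>a b. f x * G x a b + (\<lambda>a b. \<Sum>p\<in>F. f p * G p a b) a b)"
    using insert by simp
  also have "\<dots> = (\<lambda>a b. f x * E (G x) a b + E (\<lambda>a b. \<Sum>p\<in>F. f p * G p a b) a b)"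
    by (rule dprog_linear[OF d])
  also have "\<dots> = (\<lambda>a b. \<Sum>p\<in>insert x F. f p * E (G p) a b)"
    using insert by simp
  finally show ?case .
qed

lemma restr_op_expand:
  assumes fin: "finite V"
  shows "restr_op V M = (\<lambda>a b. \<Sum>p\<in>Pow V \<times> Pow V. M (fst p) (snd p) * matrix_unit (fst p) (snd p) a b)"
proof (intro ext)
  fix a b
  have "(\<Sum>p\<in>Pow V \<times> Pow V. M (fst p) (snd p) * matrix_unit (fst p) (snd p) a b) =
        (\<Sum>p\<in>Pow V \<times> Pow V. if p = (a, b) then M a b else 0)"
    by (rule sum.cong) (auto simp: matrix_unit_def)
  also have "\<dots> = restr_op V M a b" using fin by (simp add: sum.delta restr_op_def)
  finally show "restr_op V M a b = (\<Sum>p\<in>Pow V \<times> Pow V. M (fst p) (snd p) * matrix_unit (fst p) (snd p) a b)" by simp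
qed

lemma dprog_expand:
  assumes d: "is_dprog V E" and fin: "finite V"
  shows "E M = (\<lambda>a b. \<Sum>u\<in>Pow V. \<Sum>v\<in>Pow V. M u v * E (matrix_unit u v) a b)"
proof -
  have "E M = E (restr_op V M)" by (rule dprog_restr[OF d])
  also have "\<dots> = (\<lambda>a b. \<Sum>p\<in>Pow V \<times> Pow V. M (fst p) (snd p) * E (matrix_unit (fst p) (snd p)) a b)"
    unfolding restr_op_expand[OF fin] using fin
    by (subst dprog_sum[OF d, where G = "\<lambda>p. matrix_unit (fst p) (snd p)"]) auto
  also have "\<dots> = (\<lambda>a b. \<Sum>u\<in>Pow V. \<Sum>v\<in>Pow V. M u v * E (matrix_unit u v) a b)"
    by (simp add: sum.cartesian_product split_def)
  finally show ?thesis .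
qed

lemma ext_sop_expand:
  assumes d: "is_dprog V E" and fin: "finite V" and st: "s \<subseteq> X" "t \<subseteq> X"
  shows "ext_sop V X E \<rho> s t =
    (\<Sum>u\<in>Pow V. \<Sum>v\<in>Pow V. \<rho> (u \<union> (s - V)) (v \<union> (t - V)) * E (matrix_unit u v) (s \<inter> V) (t \<inter> V))"
  unfolding ext_sop_def using st by (subst dprog_expand[OF d fin]) (auto intro!: sum.cong)

lemma ext_sop_sop_adj_expand:
  assumes st: "s \<subseteq> X" "t \<subseteq> X"
  shows "ext_sop V X (sop_adj V E) A t s =
    (\<Sum>u\<in>Pow V. \<Sum>v\<in>Pow V. A (v \<union> (t - V)) (u \<union> (s - V)) * E (matrix_unit (s \<inter> V) (t \<inter> V)) u v)"
  unfolding ext_sop_def sop_adj_def matrix_unit_def using st by (auto intro!: sum.cong)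

lemma sum_nested_eq_sum_product: "(\<Sum>t\<in>T. \<Sum>v\<in>W. h t v) = (\<Sum>p\<in>T \<times> W. h (fst p) (snd p))"
  by (simp add: sum.cartesian_product split_def)

lemma sum_reorder4:
  "(\<Sum>t\<in>T. \<Sum>s\<in>S. \<Sum>u\<in>U. \<Sum>v\<in>W. f t s u v) =
   (\<Sum>p\<in>T \<times> W. \<Sum>q\<in>S \<times> U. f (fst p) (fst q) (snd q) (snd p))"
proof -
  have "(\<Sum>t\<in>T. \<Sum>s\<in>S. \<Sum>u\<in>U. \<Sum>v\<in>W. f t s u v) = (\<Sum>t\<in>T. \<Sum>v\<in>W. \<Sum>s\<in>S. \<Sum>u\<in>U. f t s u v)"
  proof (rule sum.cong[OF refl])
    fix t
    have "(\<Sum>s\<in>S. \<Sum>u\<in>U. \<Sum>v\<in>W. f t s u v) = (\<Sum>s\<in>S. \<Sum>v\<in>W. \<Sum>u\<in>U. f t s u v)"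
      by (rule sum.cong[OF refl], rule sum.swap)
    also have "\<dots> = (\<Sum>v\<in>W. \<Sum>s\<in>S. \<Sum>u\<in>U. f t s u v)" by (rule sum.swap)
    finally show "(\<Sum>s\<in>S. \<Sum>u\<in>U. \<Sum>v\<in>W. f t s u v) = (\<Sum>v\<in>W. \<Sum>s\<in>S. \<Sum>u\<in>U. f t s u v)" .
  qed
  also have "\<dots> = (\<Sum>p\<in>T \<times> W. \<Sum>s\<in>S. \<Sum>u\<in>U. f (fst p) s u (snd p))"
    by (rule sum_nested_eq_sum_product)
  also have "\<dots> = (\<Sum>p\<in>T \<times> W. \<Sum>q\<in>S \<times> U. f (fst p) (fst q) (snd q) (snd p))"
    by (rule sum.cong[OF refl], rule sum_nested_eq_sum_product)
  finally show ?thesis .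
qed

definition swap_local :: "nat set \<Rightarrow> nat set \<times> nat set \<Rightarrow> nat set \<times> nat set" where
  "swap_local V p = (snd p \<union> (fst p - V), fst p \<inter> V)"

lemma bij_betw_swap_local: "V \<subseteq> X \<Longrightarrow> bij_betw (swap_local V) (Pow X \<times> Pow V) (Pow X \<times> Pow V)"
  by (rule bij_betw_byWitness[where f' = "swap_local V"]) (auto simp: swap_local_def)

lemma sum_sum_reindex_bij_betw:
  assumes "bij_betw g D D"
  shows "(\<Sum>p\<in>D. \<Sum>q\<in>D. f (g p) (g q)) = (\<Sum>p\<in>D. \<Sum>q\<in>D. f p q)"
proof -
  have "(\<Sum>q\<in>D. f x (g q)) = (\<Sum>q\<in>D. f x q)" for x
    using sum.reindex_bij_betw[OF assms, of "f x"] .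
  then show ?thesis using sum.reindex_bij_betw[OF assms, of "\<lambda>p. \<Sum>q\<in>D. f p q"] by simp
qed

text \<open>Both traces expand into the same fourfold sum over basis labels, once the V-parts of the
  two summation indices are exchanged by swap_local.\<close>

lemma qtr_mult_ext_sop_eq_adj:
  assumes fin: "finite X" and VX: "V \<subseteq> X" and d: "is_dprog V E"
  shows "qtr X (op_mult X A (ext_sop V X E \<rho>)) = qtr X (op_mult X (ext_sop V X (sop_adj V E) A) \<rho>)"
proof -
  have finV: "finite V" using fin VX by (rule finite_subset[rotated])
  define D where "D = Pow X \<times> Pow V"
  define f1 where "f1 t s u v = A t s * (\<rho> (u \<union> (s - V)) (v \<union> (t - V)) * E (matrix_unit u v) (s \<inter> V) (t \<inter> V))"
    for t s u v
  define f2 where "f2 t s u v = A (v \<union> (t - V)) (u \<union> (s - V)) * E (matrix_unit (s \<inter> V) (t \<inter> V)) u v * \<rho> s t"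
    for t s u v
  have swap: "f2 (fst (swap_local V p)) (fst (swap_local V q)) (snd (swap_local V q)) (snd (swap_local V p))
      = f1 (fst p) (fst q) (snd q) (snd p)" if "p \<in> D" "q \<in> D" for p q
  proof -
    obtain t v s u where pq: "p = (t, v)" "q = (s, u)" by (cases p, cases q)
    with that have "v \<subseteq> V" "u \<subseteq> V" unfolding D_def by auto
    then have "t \<inter> V \<union> (v \<union> (t - V) - V) = t" "s \<inter> V \<union> (u \<union> (s - V) - V) = s"
      "(u \<union> (s - V)) \<inter> V = u" "(v \<union> (t - V)) \<inter> V = v" by auto
    then show ?thesis unfolding f1_def f2_def swap_local_def pq by (simp add: mult_ac)
  qed
  have "qtr X (op_mult X A (ext_sop V X E \<rho>)) = (\<Sum>t\<in>Pow X. \<Sum>s\<in>Pow X. \<Sum>u\<in>Pow V. \<Sum>v\<in>Pow V. f1 t s u v)"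
    unfolding qtr_def op_mult_def f1_def
    by (intro sum.cong refl) (simp only: ext_sop_expand[OF d finV] sum_distrib_left Pow_iff)
  also have "\<dots> = (\<Sum>p\<in>D. \<Sum>q\<in>D. f1 (fst p) (fst q) (snd q) (snd p))"
    unfolding D_def by (rule sum_reorder4)
  also have "\<dots> = (\<Sum>p\<in>D. \<Sum>q\<in>D. f2 (fst (swap_local V p)) (fst (swap_local V q))
                                   (snd (swap_local V q)) (snd (swap_local V p)))"
    using swap by simp
  also have "\<dots> = (\<Sum>p\<in>D. \<Sum>q\<in>D. f2 (fst p) (fst q) (snd q) (snd p))"
    using bij_betw_swap_local[OF VX] unfolding D_def by (rule sum_sum_reindex_bij_betw)
  also have "\<dots> = (\<Sum>t\<in>Pow X. \<Sum>s\<in>Pow X. \<Sum>u\<in>Pow V. \<Sum>v\<in>Pow V. f2 t s u v)"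
    unfolding D_def by (rule sum_reorder4[symmetric])
  also have "\<dots> = qtr X (op_mult X (ext_sop V X (sop_adj V E) A) \<rho>)"
    unfolding qtr_def op_mult_def f2_def
    by (intro sum.cong refl) (simp only: ext_sop_sop_adj_expand sum_distrib_right Pow_iff)
  finally show ?thesis .
qed

lemma sop_adj_zero: "sop_adj V E (\<lambda>u v. 0) = (\<lambda>s t. 0)"
  unfolding sop_adj_def by (auto intro!: ext)

lemma ext_sop_ext_op:
  assumes VY: "V \<subseteq> Y" and YX: "Y \<subseteq> X" and F0: "F (\<lambda>u v. 0) = (\<lambda>s t. 0)"
  shows "ext_sop V X F (ext_op Y X A) = ext_op Y X (ext_sop V Y F A)"
proof (intro ext)
  fix s t
  have diff: "(u \<union> (w - V)) - Y = w - Y" and int: "(u \<union> (w - V)) \<inter> Y = u \<union> (w \<inter> Y - V)"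
    if "u \<subseteq> V" for u w using that VY by auto
  let ?blk = "\<lambda>u v. if u \<subseteq> V \<and> v \<subseteq> V then ext_op Y X A (u \<union> (s - V)) (v \<union> (t - V)) else 0"
  show "ext_sop V X F (ext_op Y X A) s t = ext_op Y X (ext_sop V Y F A) s t"
  proof (cases "s \<subseteq> X \<and> t \<subseteq> X \<and> s - Y = t - Y")
    case True
    then have "?blk = (\<lambda>u v. if u \<subseteq> V \<and> v \<subseteq> V then A (u \<union> (s \<inter> Y - V)) (v \<union> (t \<inter> Y - V)) else 0)"
      using VY YX by (auto intro!: ext simp: ext_op_def diff int) blast+
    moreover have "s \<inter> Y \<inter> V = s \<inter> V" "t \<inter> Y \<inter> V = t \<inter> V" using VY by auto
    ultimately show ?thesis using True unfolding ext_sop_def ext_op_def by simp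
  next
    case False
    moreover have "?blk = (\<lambda>u v. 0)" if "s - Y \<noteq> t - Y"
      by (intro ext) (auto simp: ext_op_def diff that)
    ultimately show ?thesis using F0 unfolding ext_sop_def ext_op_def by auto
  qed
qed

lemma qtr_ext_op_mult_ext_sop:
  assumes fin: "finite X" and VY: "V \<subseteq> Y" and YX: "Y \<subseteq> X" and d: "is_dprog V E"
  shows "qtr X (op_mult X (ext_op Y X Z) (ext_sop V X E \<rho>)) =
         qtr X (op_mult X (ext_op Y X (ext_sop V Y (sop_adj V E) Z)) \<rho>)"
proof -
  have VX: "V \<subseteq> X" using VY YX by simp
  show ?thesis
    unfolding qtr_mult_ext_sop_eq_adj[OF fin VX d] ext_sop_ext_op[where F = "sop_adj V E", OF VY YX sop_adj_zero] ..
qed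

lemma wf_ext_sop: "wf_op X (ext_sop V X F A)"
  unfolding wf_op_def ext_sop_def by auto

definition env_block :: "nat set \<Rightarrow> nat set \<Rightarrow> qop \<Rightarrow> qop" where
  "env_block V a \<rho> = (\<lambda>u v. if u \<subseteq> V \<and> v \<subseteq> V then \<rho> (u \<union> a) (v \<union> a) else 0)"

lemma is_pos_env_block:
  assumes fin: "finite X" and VX: "V \<subseteq> X" and p: "is_pos X \<rho>" and a: "a \<subseteq> X - V"
  shows "is_pos V (env_block V a \<rho>)"
  unfolding is_pos_def
proof (intro conjI ballI)
  show "wf_op V (env_block V a \<rho>)" unfolding wf_op_def env_block_def by auto
  fix x assume x: "x \<in> vecs V"
  define y where "y = (\<lambda>s. if s \<subseteq> X \<and> s - V = a then x (s \<inter> V) else 0)"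
  have yv: "y \<in> vecs X" unfolding y_def vecs_def by auto
  have yu: "\<And>u. u \<subseteq> V \<Longrightarrow> y (u \<union> a) = x u"
  proof -
    fix u assume u: "u \<subseteq> V"
    then have "u \<union> a \<subseteq> X" "(u \<union> a) - V = a" "(u \<union> a) \<inter> V = u" using a VX by auto
    then show "y (u \<union> a) = x u" unfolding y_def by simp
  qed
  have yz: "\<And>s. s \<subseteq> X \<Longrightarrow> s - V \<noteq> a \<Longrightarrow> y s = 0" unfolding y_def by simp
  have "qform X \<rho> y = (\<Sum>s\<in>Pow X. cnj (y s) * (\<Sum>t\<in>Pow X. \<rho> s t * y t))"
    unfolding qform_def by (simp add: sum_distrib_left mult.assoc)
  also have "\<dots> = (\<Sum>s\<in>Pow X. cnj (y s) * (\<Sum>v\<in>Pow V. \<rho> s (v \<union> a) * x v))"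
  proof (rule sum.cong[OF refl])
    fix s
    have "(\<Sum>t\<in>Pow X. \<rho> s t * y t) = (\<Sum>v\<in>Pow V. \<rho> s (v \<union> a) * y (v \<union> a))"
      by (rule sum_Pow_fixed_env[OF fin VX a]) (simp add: yz)
    also have "\<dots> = (\<Sum>v\<in>Pow V. \<rho> s (v \<union> a) * x v)" by (rule sum.cong) (auto simp: yu)
    finally show "cnj (y s) * (\<Sum>t\<in>Pow X. \<rho> s t * y t) = cnj (y s) * (\<Sum>v\<in>Pow V. \<rho> s (v \<union> a) * x v)" by simp
  qed
  also have "\<dots> = (\<Sum>u\<in>Pow V. cnj (y (u \<union> a)) * (\<Sum>v\<in>Pow V. \<rho> (u \<union> a) (v \<union> a) * x v))"
    by (rule sum_Pow_fixed_env[OF fin VX a]) (simp add: yz)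
  also have "\<dots> = qform V (env_block V a \<rho>) x"
    unfolding qform_def env_block_def by (auto simp: yu sum_distrib_left mult.assoc intro!: sum.cong)
  finally have e: "qform V (env_block V a \<rho>) x = qform X \<rho> y" by simp
  show "Im (qform V (env_block V a \<rho>) x) = 0" "0 \<le> Re (qform V (env_block V a \<rho>) x)"
    using p yv unfolding e is_pos_def by auto
qed

text \<open>E \<otimes> id acts blockwise on the environment labels a, so its trace is the sum of the
  traces of E applied to the diagonal blocks \<rho>_aa, each of which is positive.\<close>

lemma qtr_ext_sop_le:
  assumes fin: "finite X" and VX: "V \<subseteq> X" and d: "is_dprog V E" and p: "is_pos X \<rho>"
  shows "Re (qtr X (ext_sop V X E \<rho>)) \<le> Re (qtr X \<rho>)"
proof -
  have e1: "qtr X (ext_sop V X E \<rho>) = (\<Sum>a\<in>Pow (X - V). qtr V (E (env_block V a \<rho>)))"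
    unfolding qtr_def
  proof (subst sum_Pow_split[OF fin VX], rule sum.cong[OF refl], rule sum.cong[OF refl])
    fix a u assume a: "a \<in> Pow (X - V)" and u: "u \<in> Pow V"
    then have h: "u \<union> a \<subseteq> X" "(u \<union> a) - V = a" "(u \<union> a) \<inter> V = u" using VX by auto
    show "ext_sop V X E \<rho> (u \<union> a) (u \<union> a) = E (env_block V a \<rho>) u u"
      unfolding ext_sop_def env_block_def h(2) h(3) using h(1) by simp
  qed
  have e2: "qtr X \<rho> = (\<Sum>a\<in>Pow (X - V). qtr V (env_block V a \<rho>))"
    unfolding qtr_def env_block_def by (subst sum_Pow_split[OF fin VX]) (auto intro!: sum.cong)
  have "(\<Sum>a\<in>Pow (X - V). Re (qtr V (E (env_block V a \<rho>)))) \<le> (\<Sum>a\<in>Pow (X - V). Re (qtr V (env_block V a \<rho>)))"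
    by (rule sum_mono) (auto intro!: dprog_qtr_le[OF d] is_pos_env_block[OF fin VX p])
  then show ?thesis unfolding e1 e2 by (simp add: Re_sum)
qed

section \<open>Effects and correctness formulas\<close>

text \<open>Effects 0 \<le> T \<le> I on H_Y, expressed by tests against positive operators on every
  extension H_X: this is the form in which duality with a program delivers them.\<close>

definition is_effect :: "nat set \<Rightarrow> qop \<Rightarrow> bool" where
  "is_effect Y T \<longleftrightarrow> wf_op Y T \<and>
     (\<forall>X \<sigma>. finite X \<and> Y \<subseteq> X \<and> is_pos X \<sigma> \<longrightarrow>
        Im (qtr X (op_mult X (ext_op Y X T) \<sigma>)) = 0 \<and>
        0 \<le> Re (qtr X (op_mult X (ext_op Y X T) \<sigma>)) \<and>
        Re (qtr X (op_mult X (ext_op Y X T) \<sigma>)) \<le> Re (qtr X \<sigma>))"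

lemma is_effect_imp_wf: "is_effect Y T \<Longrightarrow> wf_op Y T"
  unfolding is_effect_def by simp

lemma is_effectD:
  assumes "is_effect Y T" and "finite X" and "Y \<subseteq> X" and "is_pos X \<sigma>"
  shows "Im (qtr X (op_mult X (ext_op Y X T) \<sigma>)) = 0"
    and "0 \<le> Re (qtr X (op_mult X (ext_op Y X T) \<sigma>))"
    and "Re (qtr X (op_mult X (ext_op Y X T) \<sigma>)) \<le> Re (qtr X \<sigma>)"
  using assms unfolding is_effect_def by auto

lemma is_effect_ext_sop_adj:
  assumes VY: "V \<subseteq> Y" and d: "is_dprog V E" and z: "is_proj Y Z"
  shows "is_effect Y (ext_sop V Y (sop_adj V E) Z)"
proof -
  let ?T = "ext_sop V Y (sop_adj V E) Z"
  have "Im (qtr X (op_mult X (ext_op Y X ?T) \<sigma>)) = 0 \<and> 0 \<le> Re (qtr X (op_mult X (ext_op Y X ?T) \<sigma>)) \<and>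
        Re (qtr X (op_mult X (ext_op Y X ?T) \<sigma>)) \<le> Re (qtr X \<sigma>)"
    if fin: "finite X" and YX: "Y \<subseteq> X" and s: "is_pos X \<sigma>" for X \<sigma>
  proof -
    have VX: "V \<subseteq> X" using VY YX by simp
    have "Re (qtr X (ext_sop V X E \<sigma>)) \<le> Re (qtr X \<sigma>)" by (rule qtr_ext_sop_le[OF fin VX d s])
    then show ?thesis
      using qtr_proj_mult_pos_bounds[OF fin is_proj_ext_op[OF fin YX z] dprog_ext_sop_pos[OF d fin VX s]]
      unfolding qtr_ext_op_mult_ext_sop[OF fin VY YX d] by linarith
  qed
  then show ?thesis unfolding is_effect_def by (simp add: wf_ext_sop)
qed

lemma is_effect_imp_pos:
  assumes fin: "finite Y" and T: "is_effect Y T"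
  shows "is_pos Y T" and "is_pos Y (proj_perp Y T)"
proof -
  have w: "wf_op Y T" by (rule is_effect_imp_wf[OF T])
  have b: "Im (qform Y T x) = 0 \<and> 0 \<le> Re (qform Y T x) \<and> Re (qform Y T x) \<le> Re (sqnorm Y x)"
    if "x \<in> vecs Y" for x
    using is_effectD[OF T fin order_refl is_pos_outer[OF that]]
    unfolding qform_eq_qtr_outer qtr_outer ext_op_self[OF w] by simp
  show "is_pos Y T" using w b unfolding is_pos_def by simp
  show "is_pos Y (proj_perp Y T)"
    using b sqnorm_nonneg wf_op_diff[OF wf_op_id w]
    unfolding is_pos_def proj_perp_eq_diff qform_diff by (simp add: qform_id[OF fin])
qed

lemma qtr_ext_proj_le_effect:
  assumes fin: "finite Y" and T: "is_effect Y T" and p: "is_proj Y P" and tp: "op_mult Y T P = P"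
    and finX: "finite X" and YX: "Y \<subseteq> X" and r: "is_pos X \<rho>"
  shows "Re (qtr X (op_mult X (ext_op Y X P) \<rho>)) \<le> Re (qtr X (op_mult X (ext_op Y X T) \<rho>))"
proof -
  have pt: "op_mult Y P T = P"
    using tp op_adj_mult[of Y T P] is_pos_op_adj[OF fin is_effect_imp_pos(1)[OF fin T]] p
    unfolding is_proj_def by simp
  have pX: "is_proj X (ext_op Y X P)" by (rule is_proj_ext_op[OF finX YX p])
  have "qtr X (op_mult X (ext_op Y X T) \<rho>) = qtr X (op_mult X (ext_op Y X P) \<rho>) +
      qtr X (op_mult X (ext_op Y X T) (sandwich X (proj_perp X (ext_op Y X P)) \<rho>))"
    by (rule qtr_mult_eq_proj_add_sandwich_perp[OF finX pX wf_ext_op])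
       (simp_all add: op_mult_ext_op[OF finX YX] tp pt)
  moreover have "0 \<le> Re (qtr X (op_mult X (ext_op Y X T) (sandwich X (proj_perp X (ext_op Y X P)) \<rho>)))"
    using is_effectD[OF T finX YX is_pos_sandwich_perp[OF finX pX r]] by simp
  ultimately show ?thesis by simp
qed

lemma qtr_ext_proj_add_effect_le:
  assumes fin: "finite Y" and T: "is_effect Y T" and p: "is_proj Y P" and tp: "op_mult Y T P = zero_op"
    and finX: "finite X" and YX: "Y \<subseteq> X" and r: "is_pos X \<rho>"
  shows "Re (qtr X (op_mult X (ext_op Y X P) \<rho>)) + Re (qtr X (op_mult X (ext_op Y X T) \<rho>))
           \<le> Re (qtr X \<rho>)"
proof -
  have pt: "op_mult Y P T = zero_op"
    using tp op_adj_mult[of Y T P] is_pos_op_adj[OF fin is_effect_imp_pos(1)[OF fin T]] p op_adj_zero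
    unfolding is_proj_def by simp
  have pX: "is_proj X (ext_op Y X P)" by (rule is_proj_ext_op[OF finX YX p])
  let ?\<sigma> = "sandwich X (proj_perp X (ext_op Y X P)) \<rho>"
  have "qtr X (op_mult X (ext_op Y X T) \<rho>) = qtr X (op_mult X (ext_op Y X T) ?\<sigma>)"
    by (rule qtr_mult_eq_sandwich_perp[OF finX wf_ext_op])
       (simp_all add: op_mult_ext_op[OF finX YX] tp pt ext_op_zero)
  moreover have "Re (qtr X (op_mult X (ext_op Y X T) ?\<sigma>)) \<le> Re (qtr X ?\<sigma>)"
    using is_effectD[OF T finX YX is_pos_sandwich_perp[OF finX pX r]] by simp
  moreover have "qtr X ?\<sigma> = qtr X \<rho> - qtr X (op_mult X (ext_op Y X P) \<rho>)"
    using r unfolding is_pos_def by (simp add: qtr_sandwich_perp[OF finX pX])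
  ultimately show ?thesis by simp
qed

lemma trace_le_effect_iff_img_subset_eig1:
  assumes fin: "finite Y" and T: "is_effect Y T" and p: "is_proj Y P"
  shows "(\<forall>X \<rho>. finite X \<and> Y \<subseteq> X \<and> pdens X \<rho> \<longrightarrow>
            Re (qtr X (op_mult X (ext_op Y X P) \<rho>)) \<le> Re (qtr X (op_mult X (ext_op Y X T) \<rho>)))
         \<longleftrightarrow> img Y P \<subseteq> eig1 Y T" (is "?trace \<longleftrightarrow> _")
proof -
  have wT: "wf_op Y T" and wP: "wf_op Y P" and mP: "op_mult Y P P = P"
    using is_effect_imp_wf[OF T] p unfolding is_proj_def by auto
  show ?thesis
  proof
    assume ?trace
    obtain c where c0: "0 < c" and pd: "pdens Y (scale_op (of_real c) P)"
      using proj_scaled_pdens[OF fin p] .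
    have "c * Re (qtr Y P) \<le> c * Re (qtr Y (op_mult Y T P))"
      using \<open>?trace\<close>[rule_format, of Y "scale_op (of_real c) P"] fin pd
      by (simp add: ext_op_self wP wT op_mult_scale_right qtr_scale mP)
    then have "Re (qtr Y (op_mult Y (proj_perp Y T) P)) \<le> 0"
      using c0 by (simp add: qtr_proj_perp_mult[OF fin wP])
    then have "op_mult Y T P = P"
      using pos_mult_proj_eq_zero_iff[OF fin is_effect_imp_pos(2)[OF fin T] p]
        op_mult_proj_perp_eq_zero_iff[OF fin wP] by simp
    then show "img Y P \<subseteq> eig1 Y T" using op_mult_eq_right_iff_img_subset_eig1[OF fin wP] by simp
  next
    assume "img Y P \<subseteq> eig1 Y T"
    then have "op_mult Y T P = P" using op_mult_eq_right_iff_img_subset_eig1[OF fin wP] by simp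
    then show ?trace using qtr_ext_proj_le_effect[OF fin T p] unfolding pdens_def by blast
  qed
qed

lemma trace_add_effect_le_iff_img_subset_nullq:
  assumes fin: "finite Y" and T: "is_effect Y T" and p: "is_proj Y P"
  shows "(\<forall>X \<rho>. finite X \<and> Y \<subseteq> X \<and> pdens X \<rho> \<longrightarrow>
            Re (qtr X (op_mult X (ext_op Y X P) \<rho>)) + Re (qtr X (op_mult X (ext_op Y X T) \<rho>))
              \<le> Re (qtr X \<rho>))
         \<longleftrightarrow> img Y P \<subseteq> nullq Y T" (is "?trace \<longleftrightarrow> _")
proof -
  have wT: "wf_op Y T" and wP: "wf_op Y P" and mP: "op_mult Y P P = P"
    using is_effect_imp_wf[OF T] p unfolding is_proj_def by auto
  have Tpos: "is_pos Y T" by (rule is_effect_imp_pos(1)[OF fin T])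
  have "img Y P \<subseteq> nullq Y T \<longleftrightarrow> op_mult Y T P = zero_op"
    using op_mult_eq_zero_iff_img_subset_ker[OF fin wP] nullq_pos_eq_ker[OF fin Tpos] by simp
  moreover have "?trace \<longleftrightarrow> op_mult Y T P = zero_op"
  proof
    assume ?trace
    obtain c where c0: "0 < c" and pd: "pdens Y (scale_op (of_real c) P)"
      using proj_scaled_pdens[OF fin p] .
    have "c * Re (qtr Y P) + c * Re (qtr Y (op_mult Y T P)) \<le> c * Re (qtr Y P)"
      using \<open>?trace\<close>[rule_format, of Y "scale_op (of_real c) P"] fin pd
      by (simp add: ext_op_self wP wT op_mult_scale_right qtr_scale mP)
    then have "Re (qtr Y (op_mult Y T P)) \<le> 0" using c0 by (simp add: mult_le_0_iff)
    then show "op_mult Y T P = zero_op" using pos_mult_proj_eq_zero_iff[OF fin Tpos p] by simp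
  next
    assume "op_mult Y T P = zero_op"
    then show ?trace using qtr_ext_proj_add_effect_le[OF fin T p] unfolding pdens_def by blast
  qed
  ultimately show ?thesis by simp
qed

lemma sat_tot_iff_img_subset_eig1:
  assumes finV: "finite V" and finW: "finite W" and ne: "EE \<noteq> {}"
    and dp: "\<And>E. E \<in> EE \<Longrightarrow> is_dprog V E"
    and p: "is_proj (V \<union> W) P" and q: "is_proj (V \<union> W) Q"
  shows "sat_tot V W EE P Q \<longleftrightarrow>
    (\<forall>E\<in>EE. img (V \<union> W) P \<subseteq> eig1 (V \<union> W) (ext_sop V (V \<union> W) (sop_adj V E) Q))"
proof -
  define Y where "Y = V \<union> W"
  have finY: "finite Y" and VY: "V \<subseteq> Y" using finV finW unfolding Y_def by auto
  define T where "T E = ext_sop V Y (sop_adj V E) Q" for E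
  have eff: "is_effect Y (T E)" if "E \<in> EE" for E
    unfolding T_def using is_effect_ext_sop_adj[OF VY dp[OF that]] q Y_def by simp
  have "u \<le> (INF E\<in>EE. Re (qtr X (op_mult X (ext_op Y X Q) (ext_sop V X E \<rho>))))
      \<longleftrightarrow> (\<forall>E\<in>EE. u \<le> Re (qtr X (op_mult X (ext_op Y X (T E)) \<rho>)))"
    if fin: "finite X" and YX: "Y \<subseteq> X" and r: "pdens X \<rho>" for X \<rho> u
  proof -
    have "(INF E\<in>EE. Re (qtr X (op_mult X (ext_op Y X Q) (ext_sop V X E \<rho>))))
        = (INF E\<in>EE. Re (qtr X (op_mult X (ext_op Y X (T E)) \<rho>)))"
      unfolding T_def using qtr_ext_op_mult_ext_sop[OF fin VY YX dp] by (intro INF_cong) auto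
    moreover have "bdd_below ((\<lambda>E. Re (qtr X (op_mult X (ext_op Y X (T E)) \<rho>))) ` EE)"
      using is_effectD(2)[OF eff fin YX] r unfolding pdens_def by (intro bdd_belowI2[where m = 0]) simp
    ultimately show ?thesis by (simp add: le_cINF_iff[OF ne])
  qed
  then have "sat_tot V W EE P Q \<longleftrightarrow> (\<forall>E\<in>EE. \<forall>X \<rho>. finite X \<and> Y \<subseteq> X \<and> pdens X \<rho> \<longrightarrow>
      Re (qtr X (op_mult X (ext_op Y X P) \<rho>)) \<le> Re (qtr X (op_mult X (ext_op Y X (T E)) \<rho>)))"
    unfolding sat_tot_def Y_def[symmetric] by (simp cong: imp_cong) blast
  also have "\<dots> \<longleftrightarrow> (\<forall>E\<in>EE. img Y P \<subseteq> eig1 Y (T E))"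
    using trace_le_effect_iff_img_subset_eig1[OF finY eff] p Y_def by simp
  finally show ?thesis unfolding Y_def T_def .
qed

lemma sat_par_iff_img_subset_nullq:
  assumes finV: "finite V" and finW: "finite W" and ne: "EE \<noteq> {}"
    and dp: "\<And>E. E \<in> EE \<Longrightarrow> is_dprog V E"
    and p: "is_proj (V \<union> W) P" and q: "is_proj (V \<union> W) Q"
  shows "sat_par V W EE P Q \<longleftrightarrow>
    (\<forall>E\<in>EE. img (V \<union> W) P \<subseteq>
       nullq (V \<union> W) (ext_sop V (V \<union> W) (sop_adj V E) (proj_perp (V \<union> W) Q)))"
proof -
  define Y where "Y = V \<union> W"
  have finY: "finite Y" and VY: "V \<subseteq> Y" using finV finW unfolding Y_def by auto
  define T where "T E = ext_sop V Y (sop_adj V E) (proj_perp Y Q)" for E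
  have eff: "is_effect Y (T E)" if "E \<in> EE" for E
    unfolding T_def using is_effect_ext_sop_adj[OF VY dp[OF that] is_proj_perp[OF finY]] q Y_def by simp
  have "u \<le> (INF E\<in>EE. Re (qtr X (op_mult X (ext_op Y X Q) (ext_sop V X E \<rho>)))
                          + Re (qtr X \<rho>) - Re (qtr X (ext_sop V X E \<rho>)))
      \<longleftrightarrow> (\<forall>E\<in>EE. u + Re (qtr X (op_mult X (ext_op Y X (T E)) \<rho>)) \<le> Re (qtr X \<rho>))"
    if fin: "finite X" and YX: "Y \<subseteq> X" and r: "pdens X \<rho>" for X \<rho> u
  proof -
    have "qtr X (op_mult X (ext_op Y X (T E)) \<rho>) =
          qtr X (ext_sop V X E \<rho>) - qtr X (op_mult X (ext_op Y X Q) (ext_sop V X E \<rho>))"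
      if "E \<in> EE" for E
      unfolding T_def qtr_ext_op_mult_ext_sop[OF fin VY YX dp[OF that], symmetric] ext_op_proj_perp[OF YX]
      by (rule qtr_proj_perp_mult[OF fin wf_ext_sop])
    then have "(INF E\<in>EE. Re (qtr X (op_mult X (ext_op Y X Q) (ext_sop V X E \<rho>)))
                          + Re (qtr X \<rho>) - Re (qtr X (ext_sop V X E \<rho>)))
        = (INF E\<in>EE. Re (qtr X \<rho>) - Re (qtr X (op_mult X (ext_op Y X (T E)) \<rho>)))"
      by (intro INF_cong) auto
    moreover have "bdd_below ((\<lambda>E. Re (qtr X \<rho>) - Re (qtr X (op_mult X (ext_op Y X (T E)) \<rho>))) ` EE)"
      using is_effectD(3)[OF eff fin YX] r unfolding pdens_def by (intro bdd_belowI2[where m = 0]) simp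
    ultimately show ?thesis by (simp add: le_cINF_iff[OF ne] algebra_simps)
  qed
  then have "sat_par V W EE P Q \<longleftrightarrow> (\<forall>E\<in>EE. \<forall>X \<rho>. finite X \<and> Y \<subseteq> X \<and> pdens X \<rho> \<longrightarrow>
      Re (qtr X (op_mult X (ext_op Y X P) \<rho>)) + Re (qtr X (op_mult X (ext_op Y X (T E)) \<rho>))
        \<le> Re (qtr X \<rho>))"
    unfolding sat_par_def Y_def[symmetric] by (simp cong: imp_cong) blast
  also have "\<dots> \<longleftrightarrow> (\<forall>E\<in>EE. img Y P \<subseteq> nullq Y (T E))"
    using trace_add_effect_le_iff_img_subset_nullq[OF finY eff] p Y_def by simp
  finally show ?thesis unfolding Y_def T_def .
qed

lemma img_subset_nullq_ext_sop_adj_iff: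
  assumes fin: "finite Y" and VY: "V \<subseteq> Y" and d: "is_dprog V E"
    and p: "is_proj Y P" and r: "is_proj Y R"
  shows "img Y P \<subseteq> nullq Y (ext_sop V Y (sop_adj V E) (proj_perp Y R)) \<longleftrightarrow>
         img Y (ext_sop V Y E P) \<subseteq> img Y R"
proof -
  define T where "T = ext_sop V Y (sop_adj V E) (proj_perp Y R)"
  define \<sigma> where "\<sigma> = ext_sop V Y E P"
  have r': "is_proj Y (proj_perp Y R)" by (rule is_proj_perp[OF fin r])
  have Tpos: "is_pos Y T"
    unfolding T_def by (rule is_effect_imp_pos(1)[OF fin is_effect_ext_sop_adj[OF VY d r']])
  have \<sigma>pos: "is_pos Y \<sigma>" unfolding \<sigma>_def by (rule dprog_ext_sop_pos[OF d fin VY is_proj_imp_pos[OF fin p]])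
  have w\<sigma>: "wf_op Y \<sigma>" and wP: "wf_op Y P" using \<sigma>pos p unfolding is_pos_def is_proj_def by auto
  have "qtr Y (op_mult Y T P) = qtr Y (op_mult Y (proj_perp Y R) \<sigma>)"
    using qtr_ext_op_mult_ext_sop[OF fin VY order_refl d, of "proj_perp Y R" P] r' wf_ext_sop
    unfolding T_def \<sigma>_def is_proj_def by (simp add: ext_op_self)
  then have tr: "qtr Y (op_mult Y T P) = qtr Y (op_mult Y \<sigma> (proj_perp Y R))"
    by (simp add: qtr_op_mult_commute)
  have "img Y P \<subseteq> nullq Y T \<longleftrightarrow> op_mult Y T P = zero_op"
    using op_mult_eq_zero_iff_img_subset_ker[OF fin wP] nullq_pos_eq_ker[OF fin Tpos] by simp
  also have "\<dots> \<longleftrightarrow> op_mult Y \<sigma> (proj_perp Y R) = zero_op"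
    using pos_mult_proj_eq_zero_iff[OF fin Tpos p] pos_mult_proj_eq_zero_iff[OF fin \<sigma>pos r'] tr by simp
  also have "\<dots> \<longleftrightarrow> op_mult Y (proj_perp Y R) \<sigma> = zero_op"
    using op_adj_mult[of Y \<sigma> "proj_perp Y R"] is_pos_op_adj[OF fin \<sigma>pos] r' op_adj_eq_zero_iff
    unfolding is_proj_def by metis
  also have "\<dots> \<longleftrightarrow> img Y \<sigma> \<subseteq> img Y R"
    using op_mult_proj_perp_eq_zero_iff[OF fin w\<sigma>] op_mult_eq_right_iff_img_subset_eig1[OF fin w\<sigma>]
      img_proj_eq_eig1[OF fin r] by simp
  finally show ?thesis unfolding T_def \<sigma>_def .
qed

section \<open>Weakest preconditions and strongest postconditions\<close>

lemma img_greatest_proj: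
  assumes fin: "finite X" and S: "is_subspace X S"
    and F: "\<And>P. is_proj X P \<Longrightarrow> F P \<longleftrightarrow> img X P \<subseteq> S"
  shows "img X (THE P. is_proj X P \<and> F P \<and> (\<forall>P'. is_proj X P' \<and> F P' \<longrightarrow> proj_le X P' P)) = S"
proof -
  obtain P0 where p0: "is_proj X P0" and i0: "img X P0 = S" using subspace_eq_img_proj[OF fin S] by blast
  have "(THE P. is_proj X P \<and> F P \<and> (\<forall>P'. is_proj X P' \<and> F P' \<longrightarrow> proj_le X P' P)) = P0"
  proof (rule the_equality)
    show "is_proj X P0 \<and> F P0 \<and> (\<forall>P'. is_proj X P' \<and> F P' \<longrightarrow> proj_le X P' P0)"
      using p0 i0 F unfolding proj_le_def by auto
  next
    fix P assume "is_proj X P \<and> F P \<and> (\<forall>P'. is_proj X P' \<and> F P' \<longrightarrow> proj_le X P' P)"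
    then show "P = P0"
      using proj_eq_if_img_eq[OF fin _ p0] p0 i0 F unfolding proj_le_def by (metis order_refl subset_antisym)
  qed
  then show ?thesis using i0 by simp
qed

lemma img_least_proj:
  assumes fin: "finite X" and U: "U \<subseteq> vecs X"
    and F: "\<And>R. is_proj X R \<Longrightarrow> F R \<longleftrightarrow> U \<subseteq> img X R"
  shows "img X (THE R. is_proj X R \<and> F R \<and> (\<forall>R'. is_proj X R' \<and> F R' \<longrightarrow> proj_le X R R')) = cspan U"
proof -
  obtain R0 where r0: "is_proj X R0" and i0: "img X R0 = cspan U"
    using subspace_eq_img_proj[OF fin is_subspace_cspan[OF U]] by blast
  have least: "cspan U \<subseteq> img X R" if "is_proj X R" "F R" for R
    using cspan_minimal[OF is_subspace_img_proj[OF fin that(1)]] F that by blast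
  have f0: "F R0" using F[OF r0] i0 cspan_base by blast
  have "(THE R. is_proj X R \<and> F R \<and> (\<forall>R'. is_proj X R' \<and> F R' \<longrightarrow> proj_le X R R')) = R0"
  proof (rule the_equality)
    show "is_proj X R0 \<and> F R0 \<and> (\<forall>R'. is_proj X R' \<and> F R' \<longrightarrow> proj_le X R0 R')"
      using r0 f0 least i0 unfolding proj_le_def by simp
  next
    fix R assume "is_proj X R \<and> F R \<and> (\<forall>R'. is_proj X R' \<and> F R' \<longrightarrow> proj_le X R R')"
    then show "R = R0"
      using proj_eq_if_img_eq[OF fin _ r0] r0 f0 i0 least unfolding proj_le_def
      by (metis subset_antisym)
  qed
  then show ?thesis using i0 by simp
qed

lemma img_wp_a:
  assumes finV: "finite V" and finW: "finite W" and ne: "EE \<noteq> {}"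
    and dp: "\<And>E. E \<in> EE \<Longrightarrow> is_dprog V E" and q: "is_proj W Q"
  shows "img (V \<union> W) (wp_a V W EE Q) =
    (\<Inter>E\<in>EE. eig1 (V \<union> W) (ext_sop V (V \<union> W) (sop_adj V E) (ext_op W (V \<union> W) Q)))"
  unfolding wp_a_def
proof (rule img_greatest_proj)
  have q': "is_proj (V \<union> W) (ext_op W (V \<union> W) Q)" using is_proj_ext_op finV finW q by simp
  show "sat_tot V W EE P (ext_op W (V \<union> W) Q) \<longleftrightarrow> img (V \<union> W) P \<subseteq>
      (\<Inter>E\<in>EE. eig1 (V \<union> W) (ext_sop V (V \<union> W) (sop_adj V E) (ext_op W (V \<union> W) Q)))"
    if "is_proj (V \<union> W) P" for P
    using sat_tot_iff_img_subset_eig1[OF finV finW ne dp that q'] by blast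
qed (use finV finW ne in \<open>auto intro: is_subspace_INT is_subspace_eig1\<close>)

lemma img_wlp_a:
  assumes finV: "finite V" and finW: "finite W" and ne: "EE \<noteq> {}"
    and dp: "\<And>E. E \<in> EE \<Longrightarrow> is_dprog V E" and q: "is_proj W Q"
  shows "img (V \<union> W) (wlp_a V W EE Q) =
    (\<Inter>E\<in>EE. nullq (V \<union> W) (ext_sop V (V \<union> W) (sop_adj V E) (ext_op W (V \<union> W) (proj_perp W Q))))"
  unfolding wlp_a_def
proof (rule img_greatest_proj)
  let ?Y = "V \<union> W"
  have finY: "finite ?Y" using finV finW by simp
  have q': "is_proj ?Y (ext_op W ?Y Q)" using is_proj_ext_op finY q by simp
  have perp: "ext_op W ?Y (proj_perp W Q) = proj_perp ?Y (ext_op W ?Y Q)"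
    by (simp add: ext_op_proj_perp)
  show "sat_par V W EE P (ext_op W ?Y Q) \<longleftrightarrow> img ?Y P \<subseteq>
      (\<Inter>E\<in>EE. nullq ?Y (ext_sop V ?Y (sop_adj V E) (ext_op W ?Y (proj_perp W Q))))"
    if "is_proj ?Y P" for P
    unfolding perp using sat_par_iff_img_subset_nullq[OF finV finW ne dp that q'] by blast
  show "is_subspace ?Y (\<Inter>E\<in>EE. nullq ?Y (ext_sop V ?Y (sop_adj V E) (ext_op W ?Y (proj_perp W Q))))"
    unfolding perp using finY q' dp
    by (intro is_subspace_INT[OF ne] is_subspace_nullq_pos is_effect_imp_pos(1) is_effect_ext_sop_adj
        is_proj_perp) auto
qed (use finV finW in simp)

lemma img_sp_a:
  assumes finV: "finite V" and finW: "finite W" and ne: "EE \<noteq> {}"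
    and dp: "\<And>E. E \<in> EE \<Longrightarrow> is_dprog V E" and p: "is_proj W P"
  shows "img (V \<union> W) (sp_a V W EE P) =
    cspan (\<Union>E\<in>EE. op_supp (V \<union> W) (ext_sop V (V \<union> W) E (ext_op W (V \<union> W) P)))"
  unfolding sp_a_def
proof (rule img_least_proj)
  let ?Y = "V \<union> W"
  show finY: "finite ?Y" using finV finW by simp
  have p': "is_proj ?Y (ext_op W ?Y P)" using is_proj_ext_op finY p by simp
  show "sat_par V W EE (ext_op W ?Y P) R \<longleftrightarrow>
      (\<Union>E\<in>EE. op_supp ?Y (ext_sop V ?Y E (ext_op W ?Y P))) \<subseteq> img ?Y R"
    if "is_proj ?Y R" for R
    using sat_par_iff_img_subset_nullq[OF finV finW ne dp p' that]
      img_subset_nullq_ext_sop_adj_iff[OF finY _ dp p' that]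
    unfolding op_supp_def by auto
  show "(\<Union>E\<in>EE. op_supp ?Y (ext_sop V ?Y E (ext_op W ?Y P))) \<subseteq> vecs ?Y"
    unfolding op_supp_def by (intro UN_least img_subset_vecs wf_ext_sop)
qed

theorem lemma5p5:
  fixes V W :: "nat set" and EE :: "sop set" and P Q :: qop
  assumes "finite V" and "is_nprog V EE" and "finite W"
    and "is_proj W P" and "is_proj W Q"
  shows "img (V \<union> W) (wp_a V W EE Q) =
           (\<Inter>E\<in>EE. eig1 (V \<union> W) (ext_sop V (V \<union> W) (sop_adj V E) (ext_op W (V \<union> W) Q))) \<and>
         img (V \<union> W) (wlp_a V W EE Q) =
           (\<Inter>E\<in>EE. nullq (V \<union> W)
              (ext_sop V (V \<union> W) (sop_adj V E) (ext_op W (V \<union> W) (proj_perp W Q)))) \<and>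
         img (V \<union> W) (sp_a V W EE P) =
           cspan (\<Union>E\<in>EE. op_supp (V \<union> W) (ext_sop V (V \<union> W) E (ext_op W (V \<union> W) P)))"
proof -
  have ne: "EE \<noteq> {}" and dp: "\<And>E. E \<in> EE \<Longrightarrow> is_dprog V E"
    using assms(2) unfolding is_nprog_def by auto
  show ?thesis
    using img_wp_a[OF assms(1,3) ne dp assms(5)] img_wlp_a[OF assms(1,3) ne dp assms(5)]
      img_sp_a[OF assms(1,3) ne dp assms(4)] by blast
qed

end
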